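(* Let $G=\langle S_k\mid K\rangle$ be a finitely generated semigroup as described in the context with $K$ primitive, $\mathcal{A}$ a finite alphabet, and $X_{\mathbf{A}}$ a hom Markov tree shift on $G$ with $\mathbf{A}=(A,\dots,A)$. If $A$ is primitive, then the topological entropy $h=\lim_{n\to\infty}\log p_n/|\Delta_n|$ exists and equals $h^{(s)}(X_{\mathbf{A}})$.
   Context: Let $K$ be a $k\times k$ $\{0,1\}$-matrix indexed by $S_k=\{s_1,\dots,s_k\}$ and $G=\langle S_k\mid K\rangle$ the semigroup generated by $S_k$ with relations $s_is_j=1_G$ iff $K(s_i,s_j)=0$. Every $g\in G$ has a unique minimal representation $g=g_1\cdots g_n$ ($g_l\in S_k$, $K(g_l,g_{l+1})=1$), $|g|=n$. $\Delta_n=\{h\in G:|h|\le n\}$ and $\bar{\Delta}^{(g)}_n=\{gh: |h|\le n,\ |gh|=|g|+|h|\}$. A pattern $u:H\to\mathcal{A}$ ($H\subset G$ finite) is accepted by $t\in\mathcal{A}^G$ if there is $g$ with $t_{gh}=u_h$ for all $h\in H$; $p_n$ (resp. $p^{(g)}_n$) is the number of patterns on $\Delta_n$ (resp. $\bar{\Delta}^{(g)}_n$) accepted by some element of the shift. For a $k$-tuple $\mathbf{A}=(A_1,\dots,A_k)$ of $\{0,1\}$-matrices indexed by $\mathcal{A}$, $X_{\mathbf{A}}=\{t\in\mathcal{A}^G: A_i(t_g,t_{gs_i})=1 \text{ for all } g,i \text{ with } |gs_i|=|g|+1\}$; it is hom if all $A_i$ equal one matrix $A$. The $i$th stem entropy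 is $h^{(s_i)}=\limsup_n\log p^{(s_i)}_n/|\bar{\Delta}^{(s_i)}_n|$; since $K$ is primitive these coincide and $h^{(s)}$ denotes their common value. A matrix is primitive if some power has all entries positive. *)

theory Defs
  imports "HOL-Analysis.Analysis"
begin

text \<open>Generators s_1..s_k are encoded as 0..k-1; K :: nat => nat => nat is the
{0,1}-matrix (entries on {0..<k}). Elements of G are their unique minimal
representations: lists g_1...g_n with K(g_l,g_(l+1)) = 1.\<close>

definition is_min_rep :: "nat \<Rightarrow> (nat \<Rightarrow> nat \<Rightarrow> nat) \<Rightarrow> nat list \<Rightarrow> bool" where
  "is_min_rep k K w \<longleftrightarrow> set w \<subseteq> {..<k} \<and> (\<forall>l. Suc l < length w \<longrightarrow> K (w ! l) (w ! Suc l) = 1)"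

definition semigrp :: "nat \<Rightarrow> (nat \<Rightarrow> nat \<Rightarrow> nat) \<Rightarrow> nat list set" where
  "semigrp k K = {w. is_min_rep k K w}"

text \<open>Product in G: concatenate, cancelling s_i s_j = 1 whenever K(s_i,s_j) = 0.\<close>
function gmul :: "(nat \<Rightarrow> nat \<Rightarrow> nat) \<Rightarrow> nat list \<Rightarrow> nat list \<Rightarrow> nat list" where
  "gmul K g h = (if g = [] \<or> h = [] then g @ h
                 else if K (last g) (hd h) = 0 then gmul K (butlast g) (tl h)
                 else g @ h)"
  by pat_completeness auto
termination
  by (relation "Wellfounded.measure (\<lambda>(K, g, h). length g)") auto

fun mpow :: "'i set \<Rightarrow> ('i \<Rightarrow> 'i \<Rightarrow> nat) \<Rightarrow> nat \<Rightarrow> 'i \<Rightarrow> 'i \<Rightarrow> nat" where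
  "mpow I M 0 i j = (if i = j then 1 else 0)"
| "mpow I M (Suc m) i j = (\<Sum>l\<in>I. mpow I M m i l * M l j)"

definition primitive_on :: "'i set \<Rightarrow> ('i \<Rightarrow> 'i \<Rightarrow> nat) \<Rightarrow> bool" where
  "primitive_on I M \<longleftrightarrow> (\<exists>m>0. \<forall>i\<in>I. \<forall>j\<in>I. mpow I M m i j > 0)"

definition zero_one_on :: "'i set \<Rightarrow> ('i \<Rightarrow> 'i \<Rightarrow> nat) \<Rightarrow> bool" where
  "zero_one_on I M \<longleftrightarrow> (\<forall>i\<in>I. \<forall>j\<in>I. M i j \<in> {0, 1})"

definition hom_tree_shift :: "nat \<Rightarrow> (nat \<Rightarrow> nat \<Rightarrow> nat) \<Rightarrow> ('a \<Rightarrow> 'a \<Rightarrow> nat) \<Rightarrow> (nat list \<Rightarrow> 'a) set" where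
  "hom_tree_shift k K A = {t. \<forall>g\<in>semigrp k K. \<forall>i<k.
      length (gmul K g [i]) = length g + 1 \<longrightarrow> A (t g) (t (gmul K g [i])) = 1}"

definition accepted_patterns :: "nat \<Rightarrow> (nat \<Rightarrow> nat \<Rightarrow> nat) \<Rightarrow> (nat list \<Rightarrow> 'a) set \<Rightarrow> nat list set
    \<Rightarrow> (nat list \<Rightarrow> 'a option) set" where
  "accepted_patterns k K X H = {u. \<exists>t\<in>X. \<exists>g\<in>semigrp k K.
      u = (\<lambda>h. if h \<in> H then Some (t (gmul K g h)) else None)}"

definition Delta :: "nat \<Rightarrow> (nat \<Rightarrow> nat \<Rightarrow> nat) \<Rightarrow> nat \<Rightarrow> nat list set" where
  "Delta k K n = {h \<in> semigrp k K. length h \<le> n}"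

definition Delta_bar :: "nat \<Rightarrow> (nat \<Rightarrow> nat \<Rightarrow> nat) \<Rightarrow> nat list \<Rightarrow> nat \<Rightarrow> nat list set" where
  "Delta_bar k K g n = {gmul K g h | h. h \<in> semigrp k K \<and> length h \<le> n
                         \<and> length (gmul K g h) = length g + length h}"

definition p_count :: "nat \<Rightarrow> (nat \<Rightarrow> nat \<Rightarrow> nat) \<Rightarrow> (nat list \<Rightarrow> 'a) set \<Rightarrow> nat \<Rightarrow> nat" where
  "p_count k K X n = card (accepted_patterns k K X (Delta k K n))"

definition p_stem :: "nat \<Rightarrow> (nat \<Rightarrow> nat \<Rightarrow> nat) \<Rightarrow> (nat list \<Rightarrow> 'a) set \<Rightarrow> nat list \<Rightarrow> nat \<Rightarrow> nat" where
  "p_stem k K X g n = card (accepted_patterns k K X (Delta_bar k K g n))"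

definition stem_entropy :: "nat \<Rightarrow> (nat \<Rightarrow> nat \<Rightarrow> nat) \<Rightarrow> (nat list \<Rightarrow> 'a) set \<Rightarrow> nat \<Rightarrow> ereal" where
  "stem_entropy k K X i = limsup (\<lambda>n. ereal (ln (real (p_stem k K X [i] n))
                                         / real (card (Delta_bar k K [i] n))))"

end

theory Submission
  imports Defs "HOL-Real_Asymp.Real_Asymp"
begin

(* Let F(i,n,a) be the number of A-admissible labelings, with root label a, of the depth-n subtree
   hanging below a node whose last letter is s_i, and E(i,n) its number of edges. Since the tree
   below a node depends only on the node's last letter, grafting subtrees onto leaves shows that the
   extreme rates U_n = max ln F / E and L_n = min ln F / E satisfy U_N <= U_n + O(1/N) and
   L_N >= L_n - O(1/N), so both converge. Primitivity of K and A puts a copy of the best subtree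
   of depth n, carrying a fixed fraction of the edges, inside every subtree of depth n + r; this
   forces lim L = lim U =: h. Finally, the patterns on a stem or a ball are squeezed between such
   products of F's: from below by extending a labeling to a whole configuration, from above by
   splitting according to the last letters of the position. Cancellations in G reach back at most
   n letters and cost O(n) in the exponent, which is negligible: if some entry of K vanishes then
   k >= 2 and the trees grow exponentially. *)

section \<open>Reduced words\<close>

declare gmul.simps [simp del]

lemma gmul_Nil_left [simp]: "gmul K [] h = h"
  by (subst gmul.simps) simp

lemma gmul_Nil_right [simp]: "gmul K g [] = g"
  by (subst gmul.simps) simp

lemma gmul_Cons_cancel: "g \<noteq> [] \<Longrightarrow> K (last g) x = 0 \<Longrightarrow> gmul K g (x # h) = gmul K (butlast g) h"
  by (subst gmul.simps) simp

lemma gmul_Cons_append: "g = [] \<or> K (last g) x \<noteq> 0 \<Longrightarrow> gmul K g (x # h) = g @ x # h"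
  by (subst gmul.simps) auto

lemma gmul_append_left: "length h \<le> length s \<Longrightarrow> gmul K (pre @ s) h = pre @ gmul K s h"
proof (induction h arbitrary: s)
  case (Cons x h)
  then have "s \<noteq> []" by auto
  show ?case
  proof (cases "K (last s) x = 0")
    case True
    have "gmul K (pre @ s) (x # h) = gmul K (pre @ butlast s) h"
      using True \<open>s \<noteq> []\<close> by (simp add: gmul_Cons_cancel butlast_append)
    also have "\<dots> = pre @ gmul K (butlast s) h"
      using Cons by (intro Cons.IH) auto
    finally show ?thesis using True \<open>s \<noteq> []\<close> by (simp add: gmul_Cons_cancel)
  qed (use \<open>s \<noteq> []\<close> in \<open>simp add: gmul_Cons_append\<close>)
qed simp

lemma gmul_eq_append_or_shorter: "gmul K g h = g @ h \<or> length (gmul K g h) + 2 \<le> length g + length h"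
proof (induction K g h rule: gmul.induct)
  case (1 K g h)
  then show ?case by (subst (1 2) gmul.simps) (cases g; cases h; auto)
qed

lemma gmul_eq_append_if_length: "length (gmul K g h) = length g + length h \<Longrightarrow> gmul K g h = g @ h"
  using gmul_eq_append_or_shorter[of K g h] by linarith

lemma is_min_rep_successively:
  "is_min_rep k K w \<longleftrightarrow> set w \<subseteq> {..<k} \<and> successively (\<lambda>x y. K x y = 1) w"
  by (simp add: is_min_rep_def successively_conv_nth)

lemma is_min_rep_Nil [simp]: "is_min_rep k K []"
  by (simp add: is_min_rep_def)

lemma is_min_rep_singleton [simp]: "is_min_rep k K [x] \<longleftrightarrow> x < k"
  by (simp add: is_min_rep_def)

lemma is_min_rep_last: "is_min_rep k K w \<Longrightarrow> w \<noteq> [] \<Longrightarrow> last w < k"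
  unfolding is_min_rep_def using last_in_set by blast

lemma is_min_rep_Cons:
  "is_min_rep k K (x # q) \<longleftrightarrow> x < k \<and> is_min_rep k K q \<and> (q = [] \<or> K x (hd q) = 1)"
  by (auto simp: is_min_rep_successively successively_Cons)

lemma is_min_rep_append:
  "is_min_rep k K (u @ v) \<longleftrightarrow>
     is_min_rep k K u \<and> is_min_rep k K v \<and> (u = [] \<or> v = [] \<or> K (last u) (hd v) = 1)"
  by (auto simp: is_min_rep_successively successively_append_iff)

lemma is_min_rep_snoc:
  "is_min_rep k K (w @ [x]) \<longleftrightarrow> is_min_rep k K w \<and> x < k \<and> (w = [] \<or> K (last w) x = 1)"
  by (simp add: is_min_rep_append is_min_rep_Cons)

lemma finite_min_reps: "finite {q. is_min_rep k K q \<and> length q \<le> n}"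
proof (rule finite_subset)
  show "{q. is_min_rep k K q \<and> length q \<le> n} \<subseteq> {xs. set xs \<subseteq> {..<k} \<and> length xs \<le> n}"
    by (auto simp: is_min_rep_def)
qed (simp add: finite_lists_length_le)

section \<open>Powers of primitive matrices\<close>

lemma mpow_Suc_left:
  assumes "finite I" "i \<in> I" "j \<in> I"
  shows "mpow I M (Suc m) i j = (\<Sum>l\<in>I. M i l * mpow I M m l j)"
  using assms(3)
proof (induction m arbitrary: j)
  case 0
  have "mpow I M (Suc 0) i j = (\<Sum>l\<in>I. if i = l then M l j else 0)"
    by (auto intro: sum.cong)
  also have "\<dots> = (\<Sum>l\<in>I. if l = j then M i l else 0)"
    using assms(1,2) 0 by simp
  also have "\<dots> = (\<Sum>l\<in>I. M i l * mpow I M 0 l j)"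
    by (auto intro: sum.cong)
  finally show ?case .
next
  case (Suc m)
  have "mpow I M (Suc (Suc m)) i j = (\<Sum>l\<in>I. mpow I M (Suc m) i l * M l j)"
    by simp
  also have "\<dots> = (\<Sum>l\<in>I. (\<Sum>l'\<in>I. M i l' * mpow I M m l' l) * M l j)"
    by (intro sum.cong refl) (simp only: Suc.IH)
  also have "\<dots> = (\<Sum>l\<in>I. \<Sum>l'\<in>I. M i l' * mpow I M m l' l * M l j)"
    by (simp add: sum_distrib_right)
  also have "\<dots> = (\<Sum>l'\<in>I. \<Sum>l\<in>I. M i l' * mpow I M m l' l * M l j)"
    by (rule sum.swap)
  also have "\<dots> = (\<Sum>l'\<in>I. M i l' * (\<Sum>l\<in>I. mpow I M m l' l * M l j))"
    by (simp add: sum_distrib_left mult.assoc)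
  finally show ?case by simp
qed

lemma mpow_Suc_pos_imp:
  assumes "finite I" "i \<in> I" "j \<in> I" "mpow I M (Suc m) i j > 0"
  shows "\<exists>l\<in>I. M i l > 0 \<and> mpow I M m l j > 0"
proof (rule ccontr)
  assume "\<not> ?thesis"
  then have "(\<Sum>l\<in>I. M i l * mpow I M m l j) = 0" by (intro sum.neutral) auto
  then show False using assms(4) mpow_Suc_left[OF assms(1-3), of M m] by simp
qed

lemma primitive_on_row_nonzero:
  assumes "primitive_on I M" "finite I" "i \<in> I"
  shows "\<exists>l\<in>I. M i l \<noteq> 0"
proof -
  obtain m where "m > 0" "mpow I M m i i > 0"
    using assms(1,3) unfolding primitive_on_def by blast
  then show ?thesis
    using mpow_Suc_pos_imp[OF assms(2,3,3), of M "m - 1"] by auto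
qed

lemma primitive_on_col_nonzero:
  assumes "primitive_on I M" "j \<in> I"
  shows "\<exists>l\<in>I. M l j \<noteq> 0"
proof -
  obtain m where "m > 0" "mpow I M m j j > 0"
    using assms unfolding primitive_on_def by blast
  then obtain m' where pos: "mpow I M (Suc m') j j > 0" by (cases m) auto
  show ?thesis
  proof (rule ccontr)
    assume "\<not> ?thesis"
    then have "mpow I M (Suc m') j j = 0" by (simp only: mpow.simps) (rule sum.neutral, auto)
    then show False using pos by simp
  qed
qed

lemma primitive_on_eventually_pos:
  assumes "primitive_on I M" "finite I"
  shows "\<exists>p>0. \<forall>m\<ge>p. \<forall>i\<in>I. \<forall>j\<in>I. mpow I M m i j > 0"
proof -
  obtain p where p: "p > 0" "\<forall>i\<in>I. \<forall>j\<in>I. mpow I M p i j > 0"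
    using assms(1) unfolding primitive_on_def by blast
  have "\<forall>i\<in>I. \<forall>j\<in>I. mpow I M m i j > 0" if "m \<ge> p" for m
    using that
  proof (induction m rule: dec_induct)
    case (step m)
    show ?case
    proof (intro ballI)
      fix i j assume ij: "i \<in> I" "j \<in> I"
      obtain l where l: "l \<in> I" "M i l \<noteq> 0" using primitive_on_row_nonzero[OF assms ij(1)] by blast
      have "0 < M i l * mpow I M m l j" using l step.IH ij by simp
      also have "\<dots> \<le> (\<Sum>l\<in>I. M i l * mpow I M m l j)"
        by (rule member_le_sum) (use l assms(2) in auto)
      finally show "mpow I M (Suc m) i j > 0" using mpow_Suc_left[OF assms(2) ij] by simp
    qed
  qed (use p in blast)
  then show ?thesis using p(1) by blast
qed

section \<open>Limits of real sequences\<close>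

lemma tendsto_Inf_if_almost_decreasing:
  fixes x :: "nat \<Rightarrow> real"
  assumes decr: "\<And>n N. 1 \<le> n \<Longrightarrow> n \<le> N \<Longrightarrow> x N \<le> x n + e n / real N"
    and bdd: "\<And>n. 1 \<le> n \<Longrightarrow> b \<le> x n"
  shows "x \<longlonglongrightarrow> (INF n\<in>{1..}. x n)"
proof -
  have bdd': "bdd_below (x ` {1..})" using bdd by (intro bdd_belowI2[where m = b]) simp
  show ?thesis
  proof (rule order_tendstoI)
    fix a assume a: "a < (INF n\<in>{1..}. x n)"
    show "\<forall>\<^sub>F N in sequentially. a < x N"
      using eventually_ge_at_top[of "1::nat"]
    proof eventually_elim
      fix N :: nat assume "1 \<le> N"
      then have "(INF n\<in>{1..}. x n) \<le> x N" by (intro cINF_lower[OF bdd']) simp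
      then show "a < x N" using a by linarith
    qed
  next
    fix a assume "(INF n\<in>{1..}. x n) < a"
    then obtain n where n: "1 \<le> n" "x n < a" using cINF_less_iff[OF _ bdd'] by auto
    have "(\<lambda>N. e n / real N) \<longlonglongrightarrow> 0" by (rule lim_const_over_n)
    then have "\<forall>\<^sub>F N in sequentially. e n / real N < a - x n" using n(2) by (intro order_tendstoD) auto
    then show "\<forall>\<^sub>F N in sequentially. x N < a"
      using eventually_ge_at_top[of n] by eventually_elim (use decr[OF n(1)] in force)
  qed
qed

lemma tendsto_squeeze_eps:
  fixes x lo :: "nat \<Rightarrow> real"
  assumes lo: "lo \<longlonglongrightarrow> h" "\<forall>\<^sub>F n in sequentially. lo n \<le> x n"
    and up: "\<And>e. 0 < e \<Longrightarrow> \<exists>u. u \<longlonglongrightarrow> h + e \<and> (\<forall>\<^sub>F n in sequentially. x n \<le> u n)"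
  shows "x \<longlonglongrightarrow> h"
proof (rule order_tendstoI)
  fix a assume "a < h"
  then have "\<forall>\<^sub>F n in sequentially. a < lo n" by (rule order_tendstoD(1)[OF lo(1)])
  then show "\<forall>\<^sub>F n in sequentially. a < x n" using lo(2) by eventually_elim auto
next
  fix a assume "h < a"
  then obtain u where u: "u \<longlonglongrightarrow> h + (a - h) / 2" "\<forall>\<^sub>F n in sequentially. x n \<le> u n"
    using up[of "(a - h) / 2"] by auto
  have "\<forall>\<^sub>F n in sequentially. u n < a" using \<open>h < a\<close> by (intro order_tendstoD(2)[OF u(1)]) (simp add: field_simps)
  then show "\<forall>\<^sub>F n in sequentially. x n < a" using u(2) by eventually_elim auto
qed

lemma ln_le_ln_mult_exp:
  fixes p D Y :: real
  assumes "0 < p" "0 < D" "p \<le> D * exp Y"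
  shows "ln p \<le> ln D + Y"
proof -
  have "ln p \<le> ln (D * exp Y)" using assms by (intro ln_mono) auto
  also have "\<dots> = ln D + Y" using assms by (simp add: ln_mult_pos)
  finally show ?thesis .
qed

section \<open>Subtrees and their labelings\<close>

locale primitive_hom_shift =
  fixes k :: nat and K :: "nat \<Rightarrow> nat \<Rightarrow> nat" and A :: "'a::finite \<Rightarrow> 'a \<Rightarrow> nat"
  assumes K_zero_one: "zero_one_on {..<k} K" and K_primitive: "primitive_on {..<k} K"
    and A_zero_one: "zero_one_on UNIV A" and A_primitive: "primitive_on UNIV A"
    and k_pos: "0 < k"
begin

abbreviation "W \<equiv> semigrp k K"
abbreviation "X \<equiv> hom_tree_shift k K A"

lemma K_nonzero_iff: "i < k \<Longrightarrow> j < k \<Longrightarrow> K i j \<noteq> 0 \<longleftrightarrow> K i j = 1"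
  using K_zero_one unfolding zero_one_on_def by force

lemma A_nonzero_iff: "A a b \<noteq> 0 \<longleftrightarrow> A a b = 1"
  using A_zero_one unfolding zero_one_on_def by force

lemma A_le_1: "A a b \<le> 1"
  using A_nonzero_iff[of a b] by linarith

lemma A_row_exists: "\<exists>b. A a b = 1"
  using primitive_on_row_nonzero[OF A_primitive finite UNIV_I, of a] A_nonzero_iff by blast

lemma A_col_exists: "\<exists>c. A c b = 1"
  using primitive_on_col_nonzero[OF A_primitive UNIV_I, of b] A_nonzero_iff by blast

lemma gmul_closed: "g \<in> W \<Longrightarrow> h \<in> W \<Longrightarrow> gmul K g h \<in> W"
proof (induction h arbitrary: g)
  case (Cons x h)
  have x: "x < k" and h: "h \<in> W" using Cons.prems(2) by (simp_all add: semigrp_def is_min_rep_Cons)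
  show ?case
  proof (cases "g \<noteq> [] \<and> K (last g) x = 0")
    case True
    then have "is_min_rep k K (butlast g @ [last g])" using Cons.prems(1) by (simp add: semigrp_def)
    then have "butlast g \<in> W" by (simp add: is_min_rep_append semigrp_def)
    then show ?thesis using True h by (simp add: gmul_Cons_cancel Cons.IH)
  next
    case False
    have "g = [] \<or> K (last g) x = 1"
    proof (cases "g = []")
      case False
      then have "last g < k" using Cons.prems(1) by (simp add: semigrp_def is_min_rep_last)
      then show ?thesis using \<open>\<not> (g \<noteq> [] \<and> K (last g) x = 0)\<close> x K_nonzero_iff by blast
    qed simp
    moreover from this have "gmul K g (x # h) = g @ x # h" by (auto simp: gmul_Cons_append)
    ultimately show ?thesis using Cons.prems by (simp add: semigrp_def is_min_rep_append)
  qed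
qed simp

definition succs :: "nat \<Rightarrow> nat set" where
  "succs i = {j. j < k \<and> K i j \<noteq> 0}"

lemma mem_succs: "i < k \<Longrightarrow> j \<in> succs i \<longleftrightarrow> j < k \<and> K i j = 1"
  using K_nonzero_iff by (auto simp: succs_def)

lemma succs_subset: "succs i \<subseteq> {..<k}"
  by (auto simp: succs_def)

lemma finite_succs [simp]: "finite (succs i)"
  using succs_subset finite_subset by blast

lemma succs_nonempty: "i < k \<Longrightarrow> succs i \<noteq> {}"
  using primitive_on_row_nonzero[OF K_primitive, of i] by (auto simp: succs_def)

text \<open>The descendants, up to depth \<open>n\<close>, of any node whose last letter is \<open>s\<^sub>i\<close>, as words relative to that node.\<close>

definition subtree :: "nat \<Rightarrow> nat \<Rightarrow> nat list set" where
  "subtree i n = {q. is_min_rep k K (i # q) \<and> length q \<le> n}"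

definition tree :: "nat set \<Rightarrow> nat \<Rightarrow> nat list set" where
  "tree Z n = insert [] {j # q | j q. j \<in> Z \<and> q \<in> subtree j n}"

lemma finite_subtree [simp]: "finite (subtree i n)"
  by (rule finite_subset[OF _ finite_min_reps[of k K n]]) (auto simp: subtree_def is_min_rep_Cons)

lemma Nil_in_subtree [simp]: "i < k \<Longrightarrow> [] \<in> subtree i n"
  by (simp add: subtree_def)

lemma subtree_0: "i < k \<Longrightarrow> subtree i 0 = {[]}"
  by (auto simp: subtree_def)

lemma mem_tree: "w \<in> tree Z n \<longleftrightarrow> w = [] \<or> hd w \<in> Z \<and> tl w \<in> subtree (hd w) n"
  by (cases w) (auto simp: tree_def)

lemma subtree_Suc: "i < k \<Longrightarrow> subtree i (Suc n) = tree (succs i) n"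
proof (intro set_eqI)
  fix q assume "i < k"
  show "q \<in> subtree i (Suc n) \<longleftrightarrow> q \<in> tree (succs i) n"
    using \<open>i < k\<close> by (cases q) (auto simp: subtree_def mem_tree mem_succs is_min_rep_Cons)
qed

lemma tree_eq_UN: "tree Z n = insert [] (\<Union>j\<in>Z. (#) j ` subtree j n)"
  by (auto simp: tree_def)

lemma finite_tree [simp]: "finite Z \<Longrightarrow> finite (tree Z n)"
  by (simp add: tree_eq_UN)

lemma card_tree: "finite Z \<Longrightarrow> card (tree Z n) = 1 + (\<Sum>j\<in>Z. card (subtree j n))"
proof -
  assume "finite Z"
  then have "card (\<Union>j\<in>Z. (#) j ` subtree j n) = (\<Sum>j\<in>Z. card ((#) j ` subtree j n))"
    by (intro card_UN_disjoint) auto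
  also have "\<dots> = (\<Sum>j\<in>Z. card (subtree j n))"
    by (simp add: card_image)
  moreover have "[] \<notin> (\<Union>j\<in>Z. (#) j ` subtree j n)" "finite (\<Union>j\<in>Z. (#) j ` subtree j n)"
    using \<open>finite Z\<close> by auto
  ultimately show ?thesis by (simp add: tree_eq_UN)
qed

lemma card_subtree_Suc: "i < k \<Longrightarrow> card (subtree i (Suc n)) = 1 + (\<Sum>j\<in>succs i. card (subtree j n))"
  by (simp add: subtree_Suc card_tree)

lemma finite_Delta [simp]: "finite (Delta k K m)"
  using finite_min_reps[of k K m] by (simp add: Delta_def semigrp_def)

lemma Delta_Suc: "Delta k K (Suc n) = tree {..<k} n"
proof (intro set_eqI iffI)
  fix w assume "w \<in> Delta k K (Suc n)"
  then show "w \<in> tree {..<k} n"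
    by (cases w) (auto simp: Delta_def semigrp_def mem_tree subtree_def is_min_rep_Cons)
next
  fix w assume "w \<in> tree {..<k} n"
  then show "w \<in> Delta k K (Suc n)"
    by (cases w) (auto simp: Delta_def semigrp_def mem_tree subtree_def)
qed

lemma Delta_bar_singleton: "i < k \<Longrightarrow> Delta_bar k K [i] n = (#) i ` subtree i n"
proof (intro set_eqI iffI)
  fix w assume i: "i < k" and "w \<in> Delta_bar k K [i] n"
  then obtain h where h: "h \<in> W" "length h \<le> n" and w: "w = gmul K [i] h"
    and len: "length (gmul K [i] h) = length [i] + length h"
    by (auto simp: Delta_bar_def)
  have "w = i # h" using w gmul_eq_append_if_length[OF len] by simp
  moreover have "w \<in> W" using w h(1) i gmul_closed[of "[i]" h] by (simp add: semigrp_def)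
  ultimately show "w \<in> (#) i ` subtree i n" using h(2) by (auto simp: subtree_def semigrp_def)
next
  fix w assume "w \<in> (#) i ` subtree i n"
  then obtain q where q: "is_min_rep k K (i # q)" "length q \<le> n" and w: "w = i # q"
    by (auto simp: subtree_def)
  have "gmul K [i] q = i # q" using q(1) by (cases q) (auto simp: gmul_Cons_append is_min_rep_Cons)
  then show "w \<in> Delta_bar k K [i] n"
    using q w unfolding Delta_bar_def by (auto simp: semigrp_def is_min_rep_Cons intro!: exI[of _ q])
qed

lemma card_Delta_bar: "i < k \<Longrightarrow> card (Delta_bar k K [i] n) = card (subtree i n)"
  by (simp add: Delta_bar_singleton card_image)

definition labelings :: "nat list set \<Rightarrow> (nat list \<Rightarrow> 'a) set" where
  "labelings S = {\<tau>. (\<forall>w. w \<notin> S \<longrightarrow> \<tau> w = undefined) \<and>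
     (\<forall>w x. w \<in> S \<longrightarrow> w @ [x] \<in> S \<longrightarrow> A (\<tau> w) (\<tau> (w @ [x])) = 1)}"

definition rooted_labelings :: "nat list set \<Rightarrow> 'a \<Rightarrow> (nat list \<Rightarrow> 'a) set" where
  "rooted_labelings S a = {\<tau> \<in> labelings S. \<tau> [] = a}"

lemma labelings_subset_PiE: "labelings S \<subseteq> PiE S (\<lambda>_. UNIV)"
  by (auto simp: labelings_def PiE_def extensional_def)

lemma finite_labelings [simp]: "finite S \<Longrightarrow> finite (labelings S)"
  by (rule finite_subset[OF labelings_subset_PiE]) (simp add: finite_PiE)

lemma finite_rooted_labelings [simp]: "finite S \<Longrightarrow> finite (rooted_labelings S a)"
  by (simp add: rooted_labelings_def)

lemma labelings_eqI:
  "\<tau>\<^sub>1 \<in> labelings S \<Longrightarrow> \<tau>\<^sub>2 \<in> labelings S \<Longrightarrow> (\<And>w. w \<in> S \<Longrightarrow> \<tau>\<^sub>1 w = \<tau>\<^sub>2 w) \<Longrightarrow> \<tau>\<^sub>1 = \<tau>\<^sub>2"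
proof
  fix w assume "\<tau>\<^sub>1 \<in> labelings S" "\<tau>\<^sub>2 \<in> labelings S" "\<And>w. w \<in> S \<Longrightarrow> \<tau>\<^sub>1 w = \<tau>\<^sub>2 w"
  then show "\<tau>\<^sub>1 w = \<tau>\<^sub>2 w" by (cases "w \<in> S") (auto simp: labelings_def)
qed

lemma card_labelings_eq_sum:
  "finite S \<Longrightarrow> card (labelings S) = (\<Sum>a\<in>UNIV. card (rooted_labelings S a))"
proof -
  assume "finite S"
  have "labelings S = (\<Union>a. rooted_labelings S a)" by (auto simp: rooted_labelings_def)
  also have "card \<dots> = (\<Sum>a\<in>UNIV. card (rooted_labelings S a))"
    by (rule card_UN_disjoint) (auto simp: rooted_labelings_def \<open>finite S\<close>)
  finally show ?thesis .
qed

lemma card_rooted_labelings_root [simp]: "card (rooted_labelings {[]} a) = 1"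
proof -
  have "rooted_labelings {[]} a = {\<lambda>w. if w = [] then a else undefined}"
    by (auto simp: rooted_labelings_def labelings_def)
  then show ?thesis by simp
qed

definition branch_labels :: "nat set \<Rightarrow> nat \<Rightarrow> (nat list \<Rightarrow> 'a) \<Rightarrow> nat \<Rightarrow> 'a \<times> (nat list \<Rightarrow> 'a)" where
  "branch_labels Z n f = (\<lambda>j\<in>Z. (f [j], \<lambda>q\<in>subtree j n. f (j # q)))"

definition graft :: "nat set \<Rightarrow> nat \<Rightarrow> 'a \<Rightarrow> (nat \<Rightarrow> 'a \<times> (nat list \<Rightarrow> 'a)) \<Rightarrow> nat list \<Rightarrow> 'a" where
  "graft Z n a G w = (if w = [] then a else if w \<in> tree Z n then snd (G (hd w)) (tl w) else undefined)"

abbreviation branch_choices :: "nat \<Rightarrow> 'a \<Rightarrow> nat \<Rightarrow> ('a \<times> (nat list \<Rightarrow> 'a)) set" where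
  "branch_choices n a j \<equiv> SIGMA b:{b. A a b = 1}. rooted_labelings (subtree j n) b"

lemma graft_branch_labels:
  assumes "f \<in> rooted_labelings (tree Z n) a"
  shows "graft Z n a (branch_labels Z n f) = f"
proof
  fix w
  show "graft Z n a (branch_labels Z n f) w = f w"
    using assms by (cases "w = []") (auto simp: graft_def branch_labels_def mem_tree
        rooted_labelings_def labelings_def)
qed

lemma branch_labels_graft:
  assumes Z: "Z \<subseteq> {..<k}" and G: "G \<in> PiE Z (branch_choices n a)"
  shows "branch_labels Z n (graft Z n a G) = G"
proof
  fix j
  show "branch_labels Z n (graft Z n a G) j = G j"
  proof (cases "j \<in> Z")
    case True
    obtain b \<tau> where Gj: "G j = (b, \<tau>)" by (cases "G j")
    then have "\<tau> \<in> rooted_labelings (subtree j n) b" using PiE_mem[OF G True] by simp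
    then have "\<tau> [] = b" "\<And>q. q \<notin> subtree j n \<Longrightarrow> \<tau> q = undefined"
      by (auto simp: rooted_labelings_def labelings_def)
    then show ?thesis using True Gj Z
      by (auto simp: branch_labels_def graft_def mem_tree)
  qed (use G in \<open>auto simp: branch_labels_def\<close>)
qed

lemma branch_labels_mem:
  assumes Z: "Z \<subseteq> {..<k}" and f: "f \<in> rooted_labelings (tree Z n) a"
  shows "branch_labels Z n f \<in> PiE Z (branch_choices n a)"
proof -
  have edge: "\<And>w x. w \<in> tree Z n \<Longrightarrow> w @ [x] \<in> tree Z n \<Longrightarrow> A (f w) (f (w @ [x])) = 1"
    and root: "f [] = a" using f by (auto simp: rooted_labelings_def labelings_def)
  have "(f [j], \<lambda>q\<in>subtree j n. f (j # q)) \<in> branch_choices n a j" if j: "j \<in> Z" for j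
  proof -
    have "[j] \<in> tree Z n" using j Z by (auto simp: mem_tree)
    then have "A a (f [j]) = 1" using edge[of "[]" j] root by (simp add: tree_def)
    moreover have "(\<lambda>q\<in>subtree j n. f (j # q)) \<in> rooted_labelings (subtree j n) (f [j])"
      using j Z edge[of "j # _"] by (auto simp: rooted_labelings_def labelings_def mem_tree)
    ultimately show ?thesis by simp
  qed
  then show ?thesis by (auto simp: branch_labels_def)
qed

lemma graft_mem:
  assumes Z: "Z \<subseteq> {..<k}" and G: "G \<in> PiE Z (branch_choices n a)"
  shows "graft Z n a G \<in> rooted_labelings (tree Z n) a"
proof -
  have G_root: "A a (fst (G j)) = 1" and G_lab: "snd (G j) \<in> rooted_labelings (subtree j n) (fst (G j))"
    if "j \<in> Z" for j
    using G that by (auto simp: PiE_def Pi_def split: prod.splits)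
  have "A (graft Z n a G w) (graft Z n a G (w @ [x])) = 1"
    if w: "w \<in> tree Z n" and wx: "w @ [x] \<in> tree Z n" for w x
  proof (cases "w = []")
    case True
    then have "x \<in> Z" using wx by (simp add: mem_tree)
    then show ?thesis using True G_root G_lab Z
      by (auto simp: graft_def mem_tree rooted_labelings_def)
  next
    case False
    then have "hd w \<in> Z" "tl w \<in> subtree (hd w) n" "tl w @ [x] \<in> subtree (hd w) n"
      using w wx by (auto simp: mem_tree)
    then show ?thesis using False G_lab[of "hd w"]
      by (auto simp: graft_def mem_tree rooted_labelings_def labelings_def)
  qed
  moreover have "graft Z n a G w = undefined" if "w \<notin> tree Z n" for w
    using that by (auto simp: graft_def mem_tree)
  ultimately show ?thesis by (simp add: rooted_labelings_def labelings_def graft_def)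
qed

lemma card_rooted_labelings_tree:
  assumes Z: "Z \<subseteq> {..<k}"
  shows "card (rooted_labelings (tree Z n) a) =
    (\<Prod>j\<in>Z. \<Sum>b\<in>UNIV. A a b * card (rooted_labelings (subtree j n) b))"
proof -
  have "finite Z" using Z finite_subset by blast
  have "bij_betw (branch_labels Z n) (rooted_labelings (tree Z n) a) (PiE Z (branch_choices n a))"
  proof (rule bij_betw_byWitness[where f' = "graft Z n a"])
    show "branch_labels Z n ` rooted_labelings (tree Z n) a \<subseteq> PiE Z (branch_choices n a)"
      using branch_labels_mem[OF Z] by blast
    show "graft Z n a ` PiE Z (branch_choices n a) \<subseteq> rooted_labelings (tree Z n) a"
      using graft_mem[OF Z] by blast
  qed (simp_all add: graft_branch_labels branch_labels_graft Z)
  then have "card (rooted_labelings (tree Z n) a) = (\<Prod>j\<in>Z. card (branch_choices n a j))"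
    using \<open>finite Z\<close> by (simp add: bij_betw_same_card card_PiE)
  also have "\<dots> = (\<Prod>j\<in>Z. \<Sum>b\<in>UNIV. A a b * card (rooted_labelings (subtree j n) b))"
    using A_nonzero_iff by (intro prod.cong refl) (auto simp: sum.If_cases if_distrib[of "\<lambda>x. x * _"] intro!: sum.mono_neutral_cong_left)
  finally show ?thesis .
qed

fun lab_count :: "nat \<Rightarrow> nat \<Rightarrow> 'a \<Rightarrow> nat" where
  "lab_count i 0 a = 1"
| "lab_count i (Suc n) a = (\<Prod>j\<in>succs i. \<Sum>b\<in>UNIV. A a b * lab_count j n b)"

lemma lab_count_eq_card: "i < k \<Longrightarrow> lab_count i n a = card (rooted_labelings (subtree i n) a)"
proof (induction n arbitrary: i a)
  case (Suc n)
  then show ?case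
    by (simp add: subtree_Suc card_rooted_labelings_tree succs_subset)
      (intro prod.cong sum.cong refl, simp add: succs_def)
qed (simp add: subtree_0)

lemma card_labelings_subtree: "i < k \<Longrightarrow> card (labelings (subtree i n)) = (\<Sum>a\<in>UNIV. lab_count i n a)"
  by (simp add: card_labelings_eq_sum lab_count_eq_card)

lemma card_rooted_labelings_tree_eq_lab_count:
  "Z \<subseteq> {..<k} \<Longrightarrow> card (rooted_labelings (tree Z n) a) = (\<Prod>j\<in>Z. \<Sum>b\<in>UNIV. A a b * lab_count j n b)"
  by (simp add: card_rooted_labelings_tree lab_count_eq_card subset_iff)

lemma lab_count_le_sum: "lab_count j n b \<le> (\<Sum>b'\<in>UNIV. A a b' * lab_count j n b')" if "A a b = 1"
  using member_le_sum[of b UNIV "\<lambda>b'. A a b' * lab_count j n b'"] that by simp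

lemma lab_count_pos: "i < k \<Longrightarrow> 1 \<le> lab_count i n a"
proof (induction n arbitrary: i a)
  case (Suc n)
  obtain b where "A a b = 1" using A_row_exists by blast
  then have "1 \<le> (\<Sum>b\<in>UNIV. A a b * lab_count j n b)" if "j \<in> succs i" for j
    using Suc.IH[of j b] lab_count_le_sum[of a b j n] that by (simp add: succs_def)
  then have "1 \<le> (\<Prod>j\<in>succs i. \<Sum>b\<in>UNIV. A a b * lab_count j n b)" by (rule prod_ge_1)
  then show ?case by simp
qed simp

section \<open>Counting accepted patterns\<close>

definition prefix_closed :: "nat list set \<Rightarrow> bool" where
  "prefix_closed S \<longleftrightarrow> [] \<in> S \<and> (\<forall>w x. w @ [x] \<in> S \<longrightarrow> w \<in> S)"

lemma prefix_closed_tree: "prefix_closed (tree Z n)"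
  unfolding prefix_closed_def
proof (intro conjI allI impI)
  fix w x assume "w @ [x] \<in> tree Z n"
  then show "w \<in> tree Z n"
    by (cases w) (auto simp: tree_def subtree_def is_min_rep_append[of _ _ "_ # _" "[x]", simplified])
qed (simp add: tree_def)

text \<open>Off \<open>S\<close> the extension follows an arbitrary \<open>A\<close>-path, which exists because no row of \<open>A\<close> vanishes.\<close>

fun extend_rev :: "nat list set \<Rightarrow> (nat list \<Rightarrow> 'a) \<Rightarrow> nat list \<Rightarrow> 'a" where
  "extend_rev S f [] = f []"
| "extend_rev S f (x # r) =
     (if rev (x # r) \<in> S then f (rev (x # r)) else (SOME b. A (extend_rev S f r) b = 1))"

definition extend :: "nat list set \<Rightarrow> (nat list \<Rightarrow> 'a) \<Rightarrow> nat list \<Rightarrow> 'a" where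
  "extend S f w = extend_rev S f (rev w)"

lemma extend_snoc:
  "extend S f (w @ [x]) = (if w @ [x] \<in> S then f (w @ [x]) else (SOME b. A (extend S f w) b = 1))"
  by (simp add: extend_def)

lemma extend_eq: "[] \<in> S \<Longrightarrow> w \<in> S \<Longrightarrow> extend S f w = f w"
  by (cases w rule: rev_exhaust) (simp_all add: extend_def)

lemma extend_in_shift:
  assumes S: "prefix_closed S" and f: "f \<in> labelings S"
  shows "extend S f \<in> X"
  unfolding hom_tree_shift_def
proof (intro CollectI ballI allI impI)
  fix g i assume "length (gmul K g [i]) = length g + 1"
  then have gi: "gmul K g [i] = g @ [i]" using gmul_eq_append_if_length[of K g "[i]"] by simp
  show "A (extend S f g) (extend S f (gmul K g [i])) = 1"
  proof (cases "g @ [i] \<in> S")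
    case True
    moreover have "g \<in> S" "[] \<in> S" using S True by (auto simp: prefix_closed_def)
    ultimately show ?thesis using f gi extend_eq[of S]
      by (simp add: labelings_def)
  next
    case False
    then show ?thesis using gi someI_ex[OF A_row_exists] by (simp add: extend_snoc)
  qed
qed

definition pattern_of :: "nat list set \<Rightarrow> (nat list \<Rightarrow> 'a) \<Rightarrow> nat list \<Rightarrow> 'a option" where
  "pattern_of H f = (\<lambda>h. if h \<in> H then Some (f h) else None)"

lemma accepted_patterns_eq:
  "accepted_patterns k K T H = {pattern_of H (\<lambda>h. t (gmul K g h)) | t g. t \<in> T \<and> g \<in> W}"
  by (auto simp: accepted_patterns_def pattern_of_def)

lemma finite_accepted_patterns: "finite H \<Longrightarrow> finite (accepted_patterns k K X H)"
proof -
  assume "finite H"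
  have "accepted_patterns k K X H \<subseteq> pattern_of H ` PiE H (\<lambda>_. UNIV)"
  proof
    fix u assume "u \<in> accepted_patterns k K X H"
    then obtain t g where "u = pattern_of H (\<lambda>h. t (gmul K g h))"
      by (auto simp: accepted_patterns_eq)
    then have "u = pattern_of H (restrict (\<lambda>h. t (gmul K g h)) H)"
      by (auto simp: pattern_of_def)
    moreover have "restrict (\<lambda>h. t (gmul K g h)) H \<in> PiE H (\<lambda>_. UNIV)" by simp
    ultimately show "u \<in> pattern_of H ` PiE H (\<lambda>_. UNIV)" by (rule image_eqI)
  qed
  moreover have "finite (pattern_of H ` PiE H (\<lambda>_. UNIV :: 'a set))"
    using \<open>finite H\<close> by (simp add: finite_PiE)
  ultimately show ?thesis by (rule finite_subset)
qed

lemma card_rooted_labelings_le_accepted: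
  assumes S: "prefix_closed S" "finite S" and H: "H \<subseteq> S" "S - {[]} \<subseteq> H"
  shows "card (rooted_labelings S a) \<le> card (accepted_patterns k K X H)"
proof -
  have "finite H" using S(2) H(1) finite_subset by blast
  have "inj_on (pattern_of H) (rooted_labelings S a)"
  proof (rule inj_onI)
    fix f1 f2 assume f: "f1 \<in> rooted_labelings S a" "f2 \<in> rooted_labelings S a"
      and "pattern_of H f1 = pattern_of H f2"
    then have "f1 w = f2 w" if "w \<in> H" for w
      using that fun_cong[of _ _ w] by (fastforce simp: pattern_of_def)
    then show "f1 = f2"
      using f H by (intro labelings_eqI[of f1 S f2]) (auto simp: rooted_labelings_def)
  qed
  moreover have "pattern_of H ` rooted_labelings S a \<subseteq> accepted_patterns k K X H"
  proof
    fix u assume "u \<in> pattern_of H ` rooted_labelings S a"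
    then obtain f where f: "f \<in> labelings S" and u: "u = pattern_of H f"
      by (auto simp: rooted_labelings_def)
    have "extend S f h = f h" if "h \<in> H" for h
      using that H(1) S(1) extend_eq by (auto simp: prefix_closed_def)
    then have "u = pattern_of H (\<lambda>h. extend S f (gmul K [] h))"
      using u by (auto simp: pattern_of_def)
    moreover have "[] \<in> W" by (simp add: semigrp_def)
    ultimately show "u \<in> accepted_patterns k K X H"
      using extend_in_shift[OF S(1) f] unfolding accepted_patterns_eq by blast
  qed
  ultimately show ?thesis
    using \<open>finite H\<close> by (metis card_image card_mono finite_accepted_patterns)
qed

text \<open>The stem at \<open>s\<^sub>i\<close> is \<open>tree {i} n\<close> without its root, and any root label \<open>c\<close> with
  \<open>A c b = 1\<close> turns a labeling of the subtree with root label \<open>b\<close> into one of \<open>tree {i} n\<close>.\<close>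

lemma lab_count_le_p_stem: "i < k \<Longrightarrow> lab_count i n b \<le> p_stem k K X [i] n"
proof -
  assume i: "i < k"
  obtain c where c: "A c b = 1" using A_col_exists by blast
  have "lab_count i n b \<le> card (rooted_labelings (tree {i} n) c)"
    using i lab_count_le_sum[OF c] by (simp add: card_rooted_labelings_tree_eq_lab_count)
  also have "\<dots> \<le> p_stem k K X [i] n"
    unfolding p_stem_def using i prefix_closed_tree[of "{i}" n]
    by (intro card_rooted_labelings_le_accepted) (auto simp: Delta_bar_singleton tree_eq_UN)
  finally show ?thesis .
qed

lemma card_rooted_labelings_le_p_count: "card (rooted_labelings (tree {..<k} n) a) \<le> p_count k K X (Suc n)"
  unfolding p_count_def Delta_Suc using prefix_closed_tree
  by (intro card_rooted_labelings_le_accepted) auto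

lemma hom_tree_shift_edge: "t \<in> X \<Longrightarrow> w @ [x] \<in> W \<Longrightarrow> A (t w) (t (w @ [x])) = 1"
proof -
  assume t: "t \<in> X" and "w @ [x] \<in> W"
  then have w: "w \<in> W" and x: "x < k" and "w = [] \<or> K (last w) x = 1"
    by (simp_all add: semigrp_def is_min_rep_snoc)
  then have "gmul K w [x] = w @ [x]" by (auto simp: gmul_Cons_append)
  then show ?thesis using t w x unfolding hom_tree_shift_def by force
qed

lemma drop_in_Delta:
  assumes "g \<in> W" shows "drop (length g - m) g \<in> Delta k K m"
proof -
  have "is_min_rep k K (take (length g - m) g @ drop (length g - m) g)"
    using assms by (simp add: semigrp_def)
  then have "is_min_rep k K (drop (length g - m) g)"
    unfolding is_min_rep_append by blast
  then show ?thesis by (simp add: Delta_def semigrp_def)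
qed

text \<open>Only the last \<open>m\<close> letters \<open>\<sigma>\<close> of a position \<open>g\<close> can cancel against a word of length at most \<open>m\<close>,
  so the pattern seen at \<open>g\<close> is determined by \<open>\<sigma>\<close> and a labeling of \<open>\<sigma> H\<close>.\<close>

lemma card_accepted_patterns_le:
  assumes H: "H \<subseteq> W" "finite H" "\<And>h. h \<in> H \<Longrightarrow> length h \<le> m"
  shows "card (accepted_patterns k K X H) \<le> (\<Sum>\<sigma>\<in>Delta k K m. card (labelings (gmul K \<sigma> ` H)))"
proof -
  let ?pat = "\<lambda>\<sigma> \<tau>. pattern_of H (\<lambda>h. \<tau> (gmul K \<sigma> h))"
  have "accepted_patterns k K X H \<subseteq> (\<Union>\<sigma>\<in>Delta k K m. ?pat \<sigma> ` labelings (gmul K \<sigma> ` H))"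
  proof
    fix u assume "u \<in> accepted_patterns k K X H"
    then obtain t g where t: "t \<in> X" and g: "g \<in> W" and u: "u = pattern_of H (\<lambda>h. t (gmul K g h))"
      by (auto simp: accepted_patterns_eq)
    define pre \<sigma> where "pre = take (length g - m) g" and "\<sigma> = drop (length g - m) g"
    have g_eq: "g = pre @ \<sigma>" by (simp add: pre_def \<sigma>_def)
    have gmul_eq: "gmul K g h = pre @ gmul K \<sigma> h" if "h \<in> H" for h
      using H(3)[OF that] g_eq gmul_append_left[of h \<sigma> K pre] by (cases "length g \<le> m") (auto simp: pre_def \<sigma>_def)
    define \<tau> where "\<tau> = restrict (\<lambda>w. t (pre @ w)) (gmul K \<sigma> ` H)"
    have "\<tau> \<in> labelings (gmul K \<sigma> ` H)"
    proof -
      have "pre @ w @ [x] \<in> W" if wx: "w @ [x] \<in> gmul K \<sigma> ` H" for w x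
      proof -
        obtain h where h: "h \<in> H" "w @ [x] = gmul K \<sigma> h" using wx by auto
        then have "pre @ w @ [x] = gmul K g h" using gmul_eq by simp
        then show ?thesis using gmul_closed[OF g] H(1) h(1) by auto
      qed
      then show ?thesis
        using hom_tree_shift_edge[OF t, of "pre @ _"] by (auto simp: labelings_def \<tau>_def)
    qed
    moreover have "u = ?pat \<sigma> \<tau>" using gmul_eq by (auto simp: u pattern_of_def \<tau>_def)
    moreover have "\<sigma> \<in> Delta k K m" using drop_in_Delta[OF g] by (simp add: \<sigma>_def)
    ultimately show "u \<in> (\<Union>\<sigma>\<in>Delta k K m. ?pat \<sigma> ` labelings (gmul K \<sigma> ` H))" by blast
  qed
  then have "card (accepted_patterns k K X H) \<le> card (\<Union>\<sigma>\<in>Delta k K m. ?pat \<sigma> ` labelings (gmul K \<sigma> ` H))"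
    using H(2) by (intro card_mono) auto
  also have "\<dots> \<le> (\<Sum>\<sigma>\<in>Delta k K m. card (?pat \<sigma> ` labelings (gmul K \<sigma> ` H)))"
    by (rule card_UN_le) simp
  also have "\<dots> \<le> (\<Sum>\<sigma>\<in>Delta k K m. card (labelings (gmul K \<sigma> ` H)))"
    using H(2) by (intro sum_mono card_image_le) simp
  finally show ?thesis .
qed

lemma card_labelings_Un:
  assumes "finite S\<^sub>1" "finite S\<^sub>2"
  shows "card (labelings (S\<^sub>1 \<union> S\<^sub>2)) \<le> card (labelings S\<^sub>1) * card (labelings S\<^sub>2)"
proof -
  let ?r = "\<lambda>\<tau>. (restrict \<tau> S\<^sub>1, restrict \<tau> S\<^sub>2)"
  have "inj_on ?r (labelings (S\<^sub>1 \<union> S\<^sub>2))"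
  proof (rule inj_onI)
    fix \<tau>\<^sub>1 \<tau>\<^sub>2 assume \<tau>: "\<tau>\<^sub>1 \<in> labelings (S\<^sub>1 \<union> S\<^sub>2)" "\<tau>\<^sub>2 \<in> labelings (S\<^sub>1 \<union> S\<^sub>2)"
      and eq: "?r \<tau>\<^sub>1 = ?r \<tau>\<^sub>2"
    show "\<tau>\<^sub>1 = \<tau>\<^sub>2"
    proof (rule labelings_eqI[OF \<tau>])
      fix w assume "w \<in> S\<^sub>1 \<union> S\<^sub>2"
      then show "\<tau>\<^sub>1 w = \<tau>\<^sub>2 w" using eq by (metis Pair_inject Un_iff restrict_apply')
    qed
  qed
  moreover have "?r ` labelings (S\<^sub>1 \<union> S\<^sub>2) \<subseteq> labelings S\<^sub>1 \<times> labelings S\<^sub>2"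
    by (auto simp: labelings_def)
  ultimately have "card (labelings (S\<^sub>1 \<union> S\<^sub>2)) \<le> card (labelings S\<^sub>1 \<times> labelings S\<^sub>2)"
    using assms by (intro card_inj_on_le) auto
  then show ?thesis by (simp add: card_cartesian_product)
qed

lemma card_labelings_empty [simp]: "card (labelings {}) = 1"
proof -
  have "labelings {} = {\<lambda>_. undefined}" by (auto simp: labelings_def)
  then show ?thesis by simp
qed

lemma card_labelings_UN:
  assumes "finite I" "\<And>i. i \<in> I \<Longrightarrow> finite (S i)"
  shows "card (labelings (\<Union>i\<in>I. S i)) \<le> (\<Prod>i\<in>I. card (labelings (S i)))"
  using assms
proof (induction I rule: finite_induct)
  case empty
  then show ?case by simp
next
  case (insert i I)
  then have "card (labelings (\<Union>i\<in>insert i I. S i)) \<le> card (labelings (S i)) * card (labelings (\<Union>i\<in>I. S i))"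
    using card_labelings_Un[of "S i" "\<Union>i\<in>I. S i"] by simp
  also have "\<dots> \<le> card (labelings (S i)) * (\<Prod>i\<in>I. card (labelings (S i)))"
    using insert by (intro mult_le_mono2) auto
  finally show ?case using insert by simp
qed

lemma card_labelings_singleton: "card (labelings {w}) \<le> CARD('a)"
proof -
  have "card (labelings {w}) \<le> card (PiE {w} (\<lambda>_. UNIV :: 'a set))"
    by (intro card_mono labelings_subset_PiE) (simp add: finite_PiE)
  then show ?thesis by (simp add: card_PiE)
qed

lemma card_labelings_insert: "finite R \<Longrightarrow> card (labelings (insert w R)) \<le> CARD('a) * card (labelings R)"
  using card_labelings_Un[of "{w}" R] card_labelings_singleton[of w]
  by (simp add: order_trans[OF _ mult_le_mono1])

lemma card_labelings_translate:
  assumes "finite T" shows "card (labelings ((@) p ` T)) \<le> card (labelings T)"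
proof -
  let ?r = "\<lambda>\<tau>. \<lambda>q. if q \<in> T then \<tau> (p @ q) else undefined"
  have "inj_on ?r (labelings ((@) p ` T))"
  proof (rule inj_onI)
    fix \<tau>\<^sub>1 \<tau>\<^sub>2 assume \<tau>: "\<tau>\<^sub>1 \<in> labelings ((@) p ` T)" "\<tau>\<^sub>2 \<in> labelings ((@) p ` T)"
      and eq: "?r \<tau>\<^sub>1 = ?r \<tau>\<^sub>2"
    show "\<tau>\<^sub>1 = \<tau>\<^sub>2"
    proof (rule labelings_eqI[OF \<tau>])
      fix w assume "w \<in> (@) p ` T"
      then obtain q where "q \<in> T" "w = p @ q" by blast
      then show "\<tau>\<^sub>1 w = \<tau>\<^sub>2 w" using fun_cong[OF eq, of q] by simp
    qed
  qed
  moreover have "?r ` labelings ((@) p ` T) \<subseteq> labelings T"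
    by (auto simp: labelings_def)
  ultimately show ?thesis using assms by (intro card_inj_on_le) auto
qed

definition no_cancel :: "nat list \<Rightarrow> nat \<Rightarrow> bool" where
  "no_cancel \<sigma> z \<longleftrightarrow> \<sigma> = [] \<or> K (last \<sigma>) z \<noteq> 0"

definition branches :: "nat list \<Rightarrow> nat set \<Rightarrow> nat \<Rightarrow> nat list set" where
  "branches \<sigma> Z d = (\<Union>z\<in>Z. (@) (\<sigma> @ [z]) ` subtree z d)"

definition shifted_forest :: "nat list \<Rightarrow> nat set \<Rightarrow> nat \<Rightarrow> nat list set" where
  "shifted_forest \<sigma> Z d = (\<lambda>(z, q). gmul K \<sigma> (z # q)) ` (SIGMA z:Z. subtree z d)"

lemma finite_shifted_forest [simp]: "finite Z \<Longrightarrow> finite (shifted_forest \<sigma> Z d)"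
  by (simp add: shifted_forest_def)

lemma shifted_forest_UN: "shifted_forest \<sigma> Z d = (\<Union>z\<in>Z. shifted_forest \<sigma> {z} d)"
  by (auto simp: shifted_forest_def)

lemma shifted_forest_UN_roots: "shifted_forest \<sigma> (\<Union>i\<in>I. Z i) d = (\<Union>i\<in>I. shifted_forest \<sigma> (Z i) d)"
  by (auto simp: shifted_forest_def)

lemma shifted_forest_singleton: "shifted_forest \<sigma> {z} d = (\<lambda>q. gmul K \<sigma> (z # q)) ` subtree z d"
  by (force simp: shifted_forest_def)

lemma shifted_forest_no_cancel:
  "no_cancel \<sigma> z \<Longrightarrow> shifted_forest \<sigma> {z} d = (@) (\<sigma> @ [z]) ` subtree z d"
  unfolding shifted_forest_singleton by (intro image_cong) (auto simp: no_cancel_def gmul_Cons_append)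

lemma shifted_forest_cancel:
  assumes "\<not> no_cancel \<sigma> z" "z < k"
  shows "shifted_forest \<sigma> {z} d =
    insert (butlast \<sigma>) (case d of 0 \<Rightarrow> {} | Suc d' \<Rightarrow> shifted_forest (butlast \<sigma>) (succs z) d')"
proof -
  have "shifted_forest \<sigma> {z} d = gmul K (butlast \<sigma>) ` subtree z d"
    unfolding shifted_forest_singleton using assms(1)
    by (intro image_cong) (auto simp: no_cancel_def gmul_Cons_cancel)
  also have "\<dots> = insert (butlast \<sigma>) (case d of 0 \<Rightarrow> {} | Suc d' \<Rightarrow> shifted_forest (butlast \<sigma>) (succs z) d')"
    using assms(2) by (cases d) (auto simp: subtree_0 subtree_Suc tree_def shifted_forest_def)
  finally show ?thesis .
qed

lemma shifted_forest_eq_branches: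
  assumes "\<forall>i<k. \<forall>j<k. K i j \<noteq> 0" "\<sigma> \<in> W" "Z \<subseteq> {..<k}"
  shows "shifted_forest \<sigma> Z d = branches \<sigma> Z d"
proof -
  have "no_cancel \<sigma> z" if "z \<in> Z" for z
  proof (cases "\<sigma> = []")
    case False
    then have "last \<sigma> < k" using assms(2) is_min_rep_last by (simp add: semigrp_def)
    moreover have "z < k" using assms(3) that by auto
    ultimately show ?thesis using assms(1) by (simp add: no_cancel_def)
  qed (simp add: no_cancel_def)
  then show ?thesis
    by (simp add: shifted_forest_UN[of \<sigma> Z] shifted_forest_no_cancel branches_def)
qed

lemma shifted_forest_split:
  fixes \<sigma> :: "nat list"
  assumes "Z \<subseteq> {..<k}"
  defines "C \<equiv> {z\<in>Z. \<not> no_cancel \<sigma> z}"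
  shows "shifted_forest \<sigma> Z d = branches \<sigma> {z\<in>Z. no_cancel \<sigma> z} d \<union>
    (if C = {} then {} else insert (butlast \<sigma>)
      (case d of 0 \<Rightarrow> {} | Suc d' \<Rightarrow> shifted_forest (butlast \<sigma>) (\<Union>z\<in>C. succs z) d'))"
proof -
  have "Z = {z\<in>Z. no_cancel \<sigma> z} \<union> C" by (auto simp: C_def)
  then have "shifted_forest \<sigma> Z d =
      (\<Union>z\<in>{z\<in>Z. no_cancel \<sigma> z}. shifted_forest \<sigma> {z} d) \<union> (\<Union>z\<in>C. shifted_forest \<sigma> {z} d)"
    by (metis UN_Un shifted_forest_UN)
  also have "(\<Union>z\<in>C. shifted_forest \<sigma> {z} d) = (\<Union>z\<in>C. insert (butlast \<sigma>)
      (case d of 0 \<Rightarrow> {} | Suc d' \<Rightarrow> shifted_forest (butlast \<sigma>) (succs z) d'))"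
    by (intro SUP_cong refl shifted_forest_cancel) (use assms(1) in \<open>auto simp: C_def\<close>)
  also have "\<dots> = (if C = {} then {} else insert (butlast \<sigma>)
      (case d of 0 \<Rightarrow> {} | Suc d' \<Rightarrow> shifted_forest (butlast \<sigma>) (\<Union>z\<in>C. succs z) d'))"
    by (cases d) (auto simp: shifted_forest_UN_roots)
  finally show ?thesis by (simp add: branches_def shifted_forest_no_cancel)
qed

lemma sum_card_subtree_UN_succs:
  assumes "C \<subseteq> {..<k}"
  shows "(\<Sum>j\<in>(\<Union>z\<in>C. succs z). card (subtree j d)) \<le> (\<Sum>z\<in>C. card (subtree z (Suc d)))"
proof -
  have "finite C" using assms finite_subset by blast
  have "(\<Union>z\<in>C. succs z) = snd ` (SIGMA z:C. succs z)" by force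
  then have "(\<Sum>j\<in>(\<Union>z\<in>C. succs z). card (subtree j d)) \<le> (\<Sum>(z, j)\<in>(SIGMA z:C. succs z). card (subtree j d))"
    using \<open>finite C\<close> sum_image_le[of "SIGMA z:C. succs z" "\<lambda>j. card (subtree j d)" snd]
    by (simp add: case_prod_unfold comp_def)
  also have "\<dots> = (\<Sum>z\<in>C. \<Sum>j\<in>succs z. card (subtree j d))"
    using \<open>finite C\<close> by (simp add: sum.Sigma)
  also have "\<dots> \<le> (\<Sum>z\<in>C. card (subtree z (Suc d)))"
    using assms by (intro sum_mono) (auto simp: card_subtree_Suc)
  finally show ?thesis .
qed

context
  fixes c c\<^sub>1 :: real
  assumes c_nonneg: "0 \<le> c" and c\<^sub>1_nonneg: "0 \<le> c\<^sub>1"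
    and subtree_bound: "\<And>z d. z < k \<Longrightarrow>
      real (card (labelings (subtree z d))) \<le> exp (c * card (subtree z d) + c\<^sub>1)"
begin

lemma card_labelings_branches:
  assumes "Z \<subseteq> {..<k}"
  shows "real (card (labelings (branches \<sigma> Z d))) \<le> exp (c * real (\<Sum>z\<in>Z. card (subtree z d)) + real (card Z) * c\<^sub>1)"
proof -
  have "finite Z" using assms finite_subset by blast
  have "card (labelings (branches \<sigma> Z d)) \<le> (\<Prod>z\<in>Z. card (labelings ((@) (\<sigma> @ [z]) ` subtree z d)))"
    unfolding branches_def using \<open>finite Z\<close> by (intro card_labelings_UN) auto
  also have "\<dots> \<le> (\<Prod>z\<in>Z. card (labelings (subtree z d)))"
    by (intro prod_mono conjI card_labelings_translate) auto
  finally have "real (card (labelings (branches \<sigma> Z d))) \<le> (\<Prod>z\<in>Z. real (card (labelings (subtree z d))))"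
    by (metis of_nat_le_iff of_nat_prod)
  also have "\<dots> \<le> (\<Prod>z\<in>Z. exp (c * card (subtree z d) + c\<^sub>1))"
    using assms by (intro prod_mono conjI subtree_bound) auto
  also have "\<dots> = exp (c * real (\<Sum>z\<in>Z. card (subtree z d)) + real (card Z) * c\<^sub>1)"
    using \<open>finite Z\<close> by (simp add: exp_sum[symmetric] sum.distrib sum_distrib_left)
  finally show ?thesis .
qed

text \<open>Roots \<open>z\<close> cancelling the last letter of \<open>\<sigma>\<close> all fold back onto the single node \<open>butlast \<sigma>\<close>,
  whose children there form the roots of one shifted forest of depth \<open>d - 1\<close>; so each level
  costs one extra label and at most \<open>k\<close> roots.\<close>

lemma card_labelings_shifted_forest:
  "Z \<subseteq> {..<k} \<Longrightarrow> real (card (labelings (shifted_forest \<sigma> Z d))) \<le>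
    exp (c * real (\<Sum>z\<in>Z. card (subtree z d)) + real (card Z) * c\<^sub>1 + real (d + 1) * (ln (real CARD('a)) + real k * c\<^sub>1))"
proof (induction d arbitrary: \<sigma> Z rule: less_induct)
  case (less d)
  define N C where "N = {z\<in>Z. no_cancel \<sigma> z}" and "C = {z\<in>Z. \<not> no_cancel \<sigma> z}"
  define R where "R = (case d of 0 \<Rightarrow> {} | Suc d' \<Rightarrow> shifted_forest (butlast \<sigma>) (\<Union>z\<in>C. succs z) d')"
  let ?c\<^sub>2 = "ln (real CARD('a)) + real k * c\<^sub>1" and ?Q = "if C = {} then {} else insert (butlast \<sigma>) R"
  have "finite Z" using less.prems finite_subset by blast
  then have fin: "finite N" "finite C" "finite R" by (auto simp: N_def C_def R_def split: nat.split)
  have c\<^sub>2: "0 \<le> ?c\<^sub>2" using c\<^sub>1_nonneg by simp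
  have R: "real (card (labelings R)) \<le> exp (c * real (\<Sum>z\<in>C. card (subtree z d)) + real k * c\<^sub>1 + real d * ?c\<^sub>2)"
  proof (cases d)
    case 0
    then show ?thesis using c_nonneg c\<^sub>1_nonneg by (simp add: R_def sum_nonneg)
  next
    case (Suc d')
    let ?U = "\<Union>z\<in>C. succs z"
    have U: "?U \<subseteq> {..<k}" "card ?U \<le> k" using succs_subset card_mono[of "{..<k}" ?U] by auto
    have "real (card (labelings R)) \<le> exp (c * real (\<Sum>z\<in>?U. card (subtree z d')) + real (card ?U) * c\<^sub>1 + real d * ?c\<^sub>2)"
      using less.IH[of d' ?U "butlast \<sigma>"] U Suc by (simp add: R_def)
    also have "\<dots> \<le> exp (c * real (\<Sum>z\<in>C. card (subtree z d)) + real k * c\<^sub>1 + real d * ?c\<^sub>2)"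
    proof -
      have "(\<Sum>z\<in>?U. card (subtree z d')) \<le> (\<Sum>z\<in>C. card (subtree z d))"
        using sum_card_subtree_UN_succs[of C d'] less.prems Suc by (auto simp: C_def)
      then have "c * real (\<Sum>z\<in>?U. card (subtree z d')) + real (card ?U) * c\<^sub>1
          \<le> c * real (\<Sum>z\<in>C. card (subtree z d)) + real k * c\<^sub>1"
        using U(2) c_nonneg c\<^sub>1_nonneg
        by (intro add_mono mult_left_mono mult_right_mono) (auto simp del: of_nat_sum)
      then show ?thesis by simp
    qed
    finally show ?thesis .
  qed
  have Q: "real (card (labelings ?Q)) \<le> exp (c * real (\<Sum>z\<in>C. card (subtree z d)) + real (d + 1) * ?c\<^sub>2)"
  proof (cases "C = {}")
    case False
    have "card (labelings ?Q) \<le> CARD('a) * card (labelings R)"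
      using False card_labelings_insert fin by simp
    then have "real (card (labelings ?Q)) \<le> real CARD('a) * real (card (labelings R))"
      by (simp flip: of_nat_mult)
    also have "\<dots> \<le> real CARD('a) * exp (c * real (\<Sum>z\<in>C. card (subtree z d)) + real k * c\<^sub>1 + real d * ?c\<^sub>2)"
      using R by (intro mult_left_mono) auto
    also have "\<dots> = exp (c * real (\<Sum>z\<in>C. card (subtree z d)) + real (d + 1) * ?c\<^sub>2)"
      by (simp add: exp_add algebra_simps)
    finally show ?thesis .
  qed (use c_nonneg c\<^sub>2 in simp)
  have "shifted_forest \<sigma> Z d = branches \<sigma> N d \<union> ?Q"
    unfolding N_def C_def R_def by (rule shifted_forest_split[OF less.prems])
  moreover have "finite (branches \<sigma> N d)" "finite ?Q" using fin by (auto simp: branches_def)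
  ultimately have "real (card (labelings (shifted_forest \<sigma> Z d))) \<le>
      real (card (labelings (branches \<sigma> N d))) * real (card (labelings ?Q))"
    using card_labelings_Un[of "branches \<sigma> N d" ?Q] by (simp flip: of_nat_mult)
  also have "\<dots> \<le> exp (c * real (\<Sum>z\<in>N. card (subtree z d)) + real (card N) * c\<^sub>1) *
      exp (c * real (\<Sum>z\<in>C. card (subtree z d)) + real (d + 1) * ?c\<^sub>2)"
    using less.prems by (intro mult_mono Q card_labelings_branches) (auto simp: N_def)
  also have "\<dots> \<le> exp (c * real (\<Sum>z\<in>Z. card (subtree z d)) + real (card Z) * c\<^sub>1 + real (d + 1) * ?c\<^sub>2)"
  proof -
    have "Z = N \<union> C" "N \<inter> C = {}" by (auto simp: N_def C_def)
    then have "(\<Sum>z\<in>Z. card (subtree z d)) = (\<Sum>z\<in>N. card (subtree z d)) + (\<Sum>z\<in>C. card (subtree z d))"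
      using fin by (simp add: sum.union_disjoint)
    moreover have "card N \<le> card Z" using \<open>finite Z\<close> by (intro card_mono) (auto simp: N_def)
    ultimately show ?thesis using c\<^sub>1_nonneg
      by (simp add: exp_add[symmetric] algebra_simps mult_left_mono)
  qed
  finally show ?case .
qed

end

section \<open>Growth rates of labelings\<close>

definition edges :: "nat \<Rightarrow> nat \<Rightarrow> real" where
  "edges i n = real (card (subtree i n)) - 1"

lemma mem_succs_lessThan: "j \<in> succs i \<Longrightarrow> j < k"
  by (simp add: succs_def)

lemma edges_0: "i < k \<Longrightarrow> edges i 0 = 0"
  by (simp add: edges_def subtree_0)

lemma edges_Suc: "i < k \<Longrightarrow> edges i (Suc n) = (\<Sum>j\<in>succs i. edges j n + 1)"
  by (simp add: edges_def card_subtree_Suc)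

lemma edges_Suc_diff:
  "i < k \<Longrightarrow> edges i (Suc m + n) - edges i (Suc m) = (\<Sum>j\<in>succs i. edges j (m + n) - edges j m)"
  by (simp add: edges_Suc sum_subtractf[symmetric])

lemma edges_ge: "i < k \<Longrightarrow> real n \<le> edges i n"
proof (induction n arbitrary: i)
  case (Suc n)
  obtain j where j: "j \<in> succs i" using succs_nonempty[OF Suc.prems] by blast
  have "real (Suc n) \<le> edges j n + 1" using Suc.IH[OF mem_succs_lessThan[OF j]] by simp
  also have "\<dots> \<le> (\<Sum>j\<in>succs i. edges j n + 1)"
    by (rule member_le_sum[OF j]) (auto dest!: mem_succs_lessThan Suc.IH intro: add_nonneg_nonneg)
  finally show ?case using Suc.prems by (simp add: edges_Suc)
qed (simp add: edges_0)

lemma edges_nonneg: "i < k \<Longrightarrow> 0 \<le> edges i n"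
  using edges_ge[of i n] by simp

lemma edges_pos: "i < k \<Longrightarrow> 1 \<le> n \<Longrightarrow> 0 < edges i n"
  using edges_ge[of i n] by simp

lemma card_subtree_ge: "i < k \<Longrightarrow> real n + 1 \<le> real (card (subtree i n))"
  using edges_ge[of i n] by (simp add: edges_def)

lemma edges_mono: "m \<le> n \<Longrightarrow> edges i m \<le> edges i n"
proof -
  assume "m \<le> n"
  then have "subtree i m \<subseteq> subtree i n" by (auto simp: subtree_def)
  then show ?thesis by (simp add: edges_def card_mono)
qed

lemma lab_count_le: "i < k \<Longrightarrow> real (lab_count i n a) \<le> exp (edges i n * ln (real CARD('a)))"
proof (induction n arbitrary: i a)
  case (Suc n)
  have "(\<Sum>b\<in>UNIV. real (A a b) * real (lab_count j n b)) \<le> exp ((edges j n + 1) * ln (real CARD('a)))"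
    if j: "j \<in> succs i" for j
  proof -
    have "(\<Sum>b\<in>UNIV. real (A a b) * real (lab_count j n b)) \<le> (\<Sum>b\<in>(UNIV::'a set). exp (edges j n * ln (real CARD('a))))"
    proof (intro sum_mono)
      fix b
      have "real (A a b) * real (lab_count j n b) \<le> 1 * real (lab_count j n b)"
        using A_le_1[of a b] by (intro mult_right_mono) auto
      then show "real (A a b) * real (lab_count j n b) \<le> exp (edges j n * ln (real CARD('a)))"
        using Suc.IH[OF mem_succs_lessThan[OF j], of b] by simp
    qed
    also have "\<dots> = exp ((edges j n + 1) * ln (real CARD('a)))"
      by (simp add: distrib_right exp_add)
    finally show ?thesis .
  qed
  then have "real (lab_count i (Suc n) a) \<le> (\<Prod>j\<in>succs i. exp ((edges j n + 1) * ln (real CARD('a))))"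
    by (simp add: prod_mono sum_nonneg)
  also have "\<dots> = exp (edges i (Suc n) * ln (real CARD('a)))"
    using Suc.prems by (simp add: edges_Suc exp_sum sum_distrib_right)
  finally show ?case .
qed (simp add: edges_0)

lemma prod_exp_edges_diff:
  "i < k \<Longrightarrow> (\<Prod>j\<in>succs i. exp (c * (edges j (m + n) - edges j m))) =
    exp (c * (edges i (Suc m + n) - edges i (Suc m)))"
  using edges_Suc_diff[of i m n] by (simp add: exp_sum[symmetric] sum_distrib_left[symmetric])

text \<open>The depth-\<open>(m + n)\<close> subtree arises from the depth-\<open>m\<close> one by grafting depth-\<open>n\<close> subtrees
  onto its leaves, which adds \<open>edges i (m + n) - edges i m\<close> edges.\<close>

lemma lab_count_graft_le:
  assumes bound: "\<And>l b. l < k \<Longrightarrow> real (lab_count l n b) \<le> exp (c * edges l n)"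
  shows "i < k \<Longrightarrow> real (lab_count i (m + n) a) \<le> real (lab_count i m a) * exp (c * (edges i (m + n) - edges i m))"
proof (induction m arbitrary: i a)
  case (Suc m)
  let ?D = "\<lambda>j. edges j (m + n) - edges j m"
  have "real (lab_count i (Suc m + n) a) = (\<Prod>j\<in>succs i. \<Sum>b\<in>UNIV. real (A a b) * real (lab_count j (m + n) b))"
    by simp
  also have "\<dots> \<le> (\<Prod>j\<in>succs i. \<Sum>b\<in>UNIV. real (A a b) * (real (lab_count j m b) * exp (c * ?D j)))"
    using Suc.IH by (intro prod_mono conjI sum_mono sum_nonneg mult_left_mono) (auto dest: mem_succs_lessThan)
  also have "\<dots> = (\<Prod>j\<in>succs i. \<Sum>b\<in>UNIV. real (A a b) * real (lab_count j m b)) * (\<Prod>j\<in>succs i. exp (c * ?D j))"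
    by (simp add: prod.distrib[symmetric] sum_distrib_right mult.assoc)
  also have "\<dots> = real (lab_count i (Suc m) a) * exp (c * (edges i (Suc m + n) - edges i (Suc m)))"
    using prod_exp_edges_diff[OF Suc.prems] by simp
  finally show ?case .
qed (use bound in \<open>simp add: edges_0\<close>)

lemma lab_count_graft_ge:
  assumes bound: "\<And>l b. l < k \<Longrightarrow> exp (c * edges l n) \<le> real (lab_count l n b)"
  shows "i < k \<Longrightarrow> real (lab_count i m a) * exp (c * (edges i (m + n) - edges i m)) \<le> real (lab_count i (m + n) a)"
proof (induction m arbitrary: i a)
  case (Suc m)
  let ?D = "\<lambda>j. edges j (m + n) - edges j m"
  have "real (lab_count i (Suc m) a) * exp (c * (edges i (Suc m + n) - edges i (Suc m)))
      = (\<Prod>j\<in>succs i. \<Sum>b\<in>UNIV. real (A a b) * real (lab_count j m b)) * (\<Prod>j\<in>succs i. exp (c * ?D j))"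
    using prod_exp_edges_diff[OF Suc.prems] by simp
  also have "\<dots> = (\<Prod>j\<in>succs i. \<Sum>b\<in>UNIV. real (A a b) * (real (lab_count j m b) * exp (c * ?D j)))"
    by (simp add: prod.distrib[symmetric] sum_distrib_right mult.assoc)
  also have "\<dots> \<le> (\<Prod>j\<in>succs i. \<Sum>b\<in>UNIV. real (A a b) * real (lab_count j (m + n) b))"
    using Suc.IH by (intro prod_mono conjI sum_mono sum_nonneg mult_left_mono)
      (auto dest: mem_succs_lessThan intro: mult_nonneg_nonneg)
  finally show ?case by simp
qed (use bound in \<open>simp add: edges_0\<close>)

lemma sum_lab_count_graft_ge:
  assumes bound: "\<And>l b. l < k \<Longrightarrow> exp (c * edges l n) \<le> real (lab_count l n b)" and j: "j < k"
  shows "exp (c * (edges j (r + n) - edges j r)) \<le> (\<Sum>b\<in>UNIV. real (A a b) * real (lab_count j (r + n) b))"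
proof -
  obtain b where b: "A a b = 1" using A_row_exists by blast
  have "exp (c * (edges j (r + n) - edges j r)) \<le> real (lab_count j r b) * exp (c * (edges j (r + n) - edges j r))"
    using lab_count_pos[OF j, of r b] by simp
  also have "\<dots> \<le> real (lab_count j (r + n) b)"
    by (rule lab_count_graft_ge[OF bound j])
  also have "\<dots> \<le> (\<Sum>b\<in>UNIV. real (A a b) * real (lab_count j (r + n) b))"
    using lab_count_le_sum[OF b, of j "r + n"] by (simp flip: of_nat_mult of_nat_sum)
  finally show ?thesis .
qed

text \<open>Along a \<open>K\<close>-path from \<open>i\<close> to \<open>j\<^sub>0\<close> and an \<open>A\<close>-path from \<open>a\<close> to \<open>b\<^sub>0\<close>, both of length \<open>r\<close>, one leaf of the
  depth-\<open>r\<close> subtree carries the exact count for \<open>(j\<^sub>0, b\<^sub>0)\<close>; all other leaves are bounded below.\<close>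

lemma lab_count_path_ge:
  assumes bound: "\<And>l b. l < k \<Longrightarrow> exp (c * edges l n) \<le> real (lab_count l n b)" and j\<^sub>0: "j\<^sub>0 < k"
  shows "i < k \<Longrightarrow> mpow {..<k} K r i j\<^sub>0 > 0 \<Longrightarrow> mpow UNIV A r a b\<^sub>0 > 0 \<Longrightarrow>
    real (lab_count j\<^sub>0 n b\<^sub>0) * exp (c * (edges i (r + n) - edges i r - edges j\<^sub>0 n)) \<le> real (lab_count i (r + n) a)"
proof (induction r arbitrary: i a)
  case 0
  then show ?case by (simp add: edges_0 split: if_splits)
next
  case (Suc r)
  obtain i\<^sub>1 where i\<^sub>1: "i\<^sub>1 \<in> succs i" "mpow {..<k} K r i\<^sub>1 j\<^sub>0 > 0"
    using mpow_Suc_pos_imp[of "{..<k}" i j\<^sub>0 K r] Suc.prems j\<^sub>0 by (auto simp: succs_def)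
  obtain a\<^sub>1 where a\<^sub>1: "A a a\<^sub>1 = 1" "mpow UNIV A r a\<^sub>1 b\<^sub>0 > 0"
    using mpow_Suc_pos_imp[of UNIV a b\<^sub>0 A r] Suc.prems A_nonzero_iff by auto
  let ?S = "\<lambda>j. \<Sum>b\<in>UNIV. real (A a b) * real (lab_count j (r + n) b)"
  let ?D = "\<lambda>j. edges j (r + n) - edges j r"
  have "real (lab_count j\<^sub>0 n b\<^sub>0) * exp (c * (?D i\<^sub>1 - edges j\<^sub>0 n)) \<le> real (lab_count i\<^sub>1 (r + n) a\<^sub>1)"
    using Suc.IH[OF mem_succs_lessThan[OF i\<^sub>1(1)] i\<^sub>1(2) a\<^sub>1(2)] by (simp add: algebra_simps)
  also have "\<dots> \<le> ?S i\<^sub>1"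
    using lab_count_le_sum[OF a\<^sub>1(1), of i\<^sub>1 "r + n"] by (simp flip: of_nat_mult of_nat_sum)
  finally have S\<^sub>1: "real (lab_count j\<^sub>0 n b\<^sub>0) * exp (c * (?D i\<^sub>1 - edges j\<^sub>0 n)) \<le> ?S i\<^sub>1" .
  have S: "exp (c * ?D j) \<le> ?S j" if "j \<in> succs i" for j
    using sum_lab_count_graft_ge[OF bound mem_succs_lessThan[OF that]] .
  define T where "T = (\<Sum>j\<in>succs i - {i\<^sub>1}. ?D j)"
  have "edges i (Suc r + n) - edges i (Suc r) = ?D i\<^sub>1 + T"
    using edges_Suc_diff[OF Suc.prems(1), of r n] sum.remove[OF finite_succs i\<^sub>1(1), of ?D]
    by (simp add: T_def)
  then have "edges i (Suc r + n) - edges i (Suc r) - edges j\<^sub>0 n = (?D i\<^sub>1 - edges j\<^sub>0 n) + T"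
    by simp
  then have "c * (edges i (Suc r + n) - edges i (Suc r) - edges j\<^sub>0 n) = c * (?D i\<^sub>1 - edges j\<^sub>0 n) + c * T"
    by (metis distrib_left)
  then have "real (lab_count j\<^sub>0 n b\<^sub>0) * exp (c * (edges i (Suc r + n) - edges i (Suc r) - edges j\<^sub>0 n))
     = real (lab_count j\<^sub>0 n b\<^sub>0) * exp (c * (?D i\<^sub>1 - edges j\<^sub>0 n)) * (\<Prod>j\<in>succs i - {i\<^sub>1}. exp (c * ?D j))"
    by (simp add: T_def exp_add exp_sum[symmetric] sum_distrib_left)
  also have "\<dots> \<le> ?S i\<^sub>1 * (\<Prod>j\<in>succs i - {i\<^sub>1}. ?S j)"
    by (intro mult_mono S\<^sub>1 prod_mono conjI S) (auto intro: sum_nonneg prod_nonneg)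
  also have "\<dots> = real (lab_count i (Suc r + n) a)"
    using prod.remove[OF finite_succs i\<^sub>1(1), of ?S] by simp
  finally show ?case .
qed

text \<open>\<open>mpow {..<k} K r i l\<close> counts the \<open>K\<close>-paths from \<open>i\<close> to \<open>l\<close> of length \<open>r\<close>, and distinct paths
  lead to disjoint copies of \<open>subtree l m\<close> inside \<open>subtree i (r + m)\<close>.\<close>

lemma card_subtree_mpow:
  "i < k \<Longrightarrow> (\<Sum>l<k. real (mpow {..<k} K r i l) * real (card (subtree l m))) \<le> real (card (subtree i (r + m)))"
proof (induction r arbitrary: i)
  case 0
  have "(\<Sum>l<k. real (mpow {..<k} K 0 i l) * real (card (subtree l m))) =
      (\<Sum>l<k. if i = l then real (card (subtree l m)) else 0)"
    by (intro sum.cong refl) auto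
  then show ?case using 0 by simp
next
  case (Suc r)
  have "(\<Sum>l<k. real (mpow {..<k} K (Suc r) i l) * real (card (subtree l m)))
      = (\<Sum>l<k. \<Sum>j<k. real (K i j) * real (mpow {..<k} K r j l) * real (card (subtree l m)))"
    using Suc.prems by (intro sum.cong refl) (simp add: mpow_Suc_left sum_distrib_right del: mpow.simps(2))
  also have "\<dots> = (\<Sum>j<k. \<Sum>l<k. real (K i j) * real (mpow {..<k} K r j l) * real (card (subtree l m)))"
    by (rule sum.swap)
  also have "\<dots> = (\<Sum>j<k. real (K i j) * (\<Sum>l<k. real (mpow {..<k} K r j l) * real (card (subtree l m))))"
    by (simp add: sum_distrib_left mult.assoc)
  also have "\<dots> = (\<Sum>j\<in>succs i. \<Sum>l<k. real (mpow {..<k} K r j l) * real (card (subtree l m)))"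
    using Suc.prems K_nonzero_iff by (auto simp: succs_def sum.If_cases intro!: sum.mono_neutral_cong_right)
  also have "\<dots> \<le> (\<Sum>j\<in>succs i. real (card (subtree j (r + m))))"
    by (intro sum_mono Suc.IH) (simp add: succs_def)
  also have "\<dots> \<le> real (card (subtree i (Suc r + m)))"
    using Suc.prems by (simp add: card_subtree_Suc)
  finally show ?case .
qed

lemma edges_mpow_le:
  assumes "i < k" "j < k" "mpow {..<k} K r i j > 0"
  shows "edges j m \<le> edges i (r + m)"
proof -
  have "1 \<le> real (mpow {..<k} K r i j)" using assms(3) by simp
  then have "real (card (subtree j m)) \<le> real (mpow {..<k} K r i j) * real (card (subtree j m))"
    using mult_right_mono[of 1 _ "real (card (subtree j m))"] by simp
  also have "\<dots> \<le> (\<Sum>l<k. real (mpow {..<k} K r i l) * real (card (subtree l m)))"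
    using assms(2) by (intro member_le_sum) auto
  also have "\<dots> \<le> real (card (subtree i (r + m)))" by (rule card_subtree_mpow[OF assms(1)])
  finally show ?thesis by (simp add: edges_def)
qed

lemma edges_growth:
  assumes m: "1 \<le> m" and B: "\<And>j. j < k \<Longrightarrow> edges j m \<le> B"
  shows "i < k \<Longrightarrow> edges i (m + d) \<le> (2 * real k) ^ d * B"
proof (induction d arbitrary: i)
  case (Suc d)
  have "1 \<le> B" using B[OF Suc.prems] edges_ge[OF Suc.prems, of m] m by simp
  moreover have "1 \<le> (2 * real k) ^ d" using Suc.prems by (intro one_le_power) simp
  ultimately have one_le: "1 \<le> (2 * real k) ^ d * B" using mult_mono[of 1 _ 1 B] by simp
  have "edges i (m + Suc d) = (\<Sum>j\<in>succs i. edges j (m + d) + 1)" using Suc.prems by (simp add: edges_Suc)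
  also have "\<dots> \<le> (\<Sum>j\<in>succs i. (2 * real k) ^ d * B + 1)"
    by (intro sum_mono add_right_mono Suc.IH) (simp add: mem_succs_lessThan)
  also have "\<dots> \<le> real k * ((2 * real k) ^ d * B + 1)"
    using card_mono[OF _ succs_subset, of i] one_le by (simp add: mult_right_mono)
  also have "\<dots> \<le> (2 * real k) ^ Suc d * B"
    using mult_left_mono[OF one_le, of "real k"] by (simp add: algebra_simps)
  finally show ?case .
qed (use B in simp)

text \<open>Only meaningful for \<open>1 \<le> n\<close>: \<open>edges i 0 = 0\<close>, so \<open>rate i 0 a = 0\<close> by division by zero.\<close>

definition rate :: "nat \<Rightarrow> nat \<Rightarrow> 'a \<Rightarrow> real" where
  "rate i n a = ln (real (lab_count i n a)) / edges i n"

definition rates :: "nat \<Rightarrow> real set" where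
  "rates n = (\<lambda>(i, a). rate i n a) ` ({..<k} \<times> UNIV)"

definition max_rate :: "nat \<Rightarrow> real" where
  "max_rate n = Max (rates n)"

definition min_rate :: "nat \<Rightarrow> real" where
  "min_rate n = Min (rates n)"

lemma finite_rates: "finite (rates n)"
  by (simp add: rates_def)

lemma rates_nonempty: "rates n \<noteq> {}"
  using k_pos by (auto simp: rates_def)

lemma rate_le_max_rate: "i < k \<Longrightarrow> rate i n a \<le> max_rate n"
  unfolding max_rate_def by (rule Max_ge[OF finite_rates]) (auto simp: rates_def)

lemma min_rate_le_rate: "i < k \<Longrightarrow> min_rate n \<le> rate i n a"
  unfolding min_rate_def by (rule Min_le[OF finite_rates]) (auto simp: rates_def)

lemma max_rate_attained: "\<exists>i<k. \<exists>a. max_rate n = rate i n a"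
proof -
  have "max_rate n \<in> rates n" unfolding max_rate_def by (rule Max_in[OF finite_rates rates_nonempty])
  then show ?thesis by (auto simp: rates_def)
qed

lemma min_rate_attained: "\<exists>i<k. \<exists>a. min_rate n = rate i n a"
proof -
  have "min_rate n \<in> rates n" unfolding min_rate_def by (rule Min_in[OF finite_rates rates_nonempty])
  then show ?thesis by (auto simp: rates_def)
qed

lemma min_rate_le_max_rate: "min_rate n \<le> max_rate n"
  using min_rate_le_rate[OF k_pos] rate_le_max_rate[OF k_pos] order_trans by blast

lemma ln_lab_count_le_iff: "i < k \<Longrightarrow> ln (real (lab_count i n a)) \<le> y \<longleftrightarrow> real (lab_count i n a) \<le> exp y"
  using lab_count_pos[of i n a] by (metis exp_le_cancel_iff exp_ln of_nat_0_less_iff less_le_trans zero_less_one)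

lemma ln_lab_count_ge_iff: "i < k \<Longrightarrow> y \<le> ln (real (lab_count i n a)) \<longleftrightarrow> exp y \<le> real (lab_count i n a)"
  using lab_count_pos[of i n a] by (intro ln_ge_iff) simp

lemma lab_count_le_max_rate: "1 \<le> n \<Longrightarrow> l < k \<Longrightarrow> real (lab_count l n b) \<le> exp (max_rate n * edges l n)"
  using rate_le_max_rate[of l n b] edges_pos[of l n]
  by (simp add: rate_def pos_divide_le_eq flip: ln_lab_count_le_iff)

lemma lab_count_ge_min_rate: "1 \<le> n \<Longrightarrow> l < k \<Longrightarrow> exp (min_rate n * edges l n) \<le> real (lab_count l n b)"
  using min_rate_le_rate[of l n b] edges_pos[of l n]
  by (simp add: rate_def pos_le_divide_eq flip: ln_lab_count_ge_iff)

lemma min_rate_nonneg: "1 \<le> n \<Longrightarrow> 0 \<le> min_rate n"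
  using min_rate_attained[of n] lab_count_pos edges_pos by (force simp: rate_def)

lemma max_rate_le: "1 \<le> n \<Longrightarrow> max_rate n \<le> ln (real CARD('a))"
proof -
  assume n: "1 \<le> n"
  obtain i a where i: "i < k" "max_rate n = rate i n a" using max_rate_attained by blast
  have "ln (real (lab_count i n a)) \<le> edges i n * ln (real CARD('a))"
    using lab_count_le[OF i(1), of n a] by (simp add: ln_lab_count_le_iff[OF i(1)])
  then show ?thesis using i edges_pos[OF i(1) n] by (simp add: rate_def pos_divide_le_eq mult.commute)
qed

lemma max_rate_nonneg: "1 \<le> n \<Longrightarrow> 0 \<le> max_rate n"
  using min_rate_nonneg min_rate_le_max_rate order_trans by blast

definition total_edges :: "nat \<Rightarrow> real" where
  "total_edges n = (\<Sum>i<k. edges i n)"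

lemma edges_le_total_edges: "i < k \<Longrightarrow> edges i n \<le> total_edges n"
  unfolding total_edges_def by (rule member_le_sum) (auto intro: edges_nonneg)

lemma total_edges_nonneg: "0 \<le> total_edges n"
  unfolding total_edges_def by (intro sum_nonneg) (auto intro: edges_nonneg)

lemma lab_count_mult_le: "1 \<le> n \<Longrightarrow> i < k \<Longrightarrow> real (lab_count i (q * n) a) \<le> exp (max_rate n * edges i (q * n))"
proof (induction q arbitrary: i a)
  case (Suc q)
  have "real (lab_count i (q * n + n) a) \<le> real (lab_count i (q * n) a) * exp (max_rate n * (edges i (q * n + n) - edges i (q * n)))"
    by (rule lab_count_graft_le[OF lab_count_le_max_rate[OF Suc.prems(1)] Suc.prems(2)])
  also have "\<dots> \<le> exp (max_rate n * edges i (q * n)) * exp (max_rate n * (edges i (q * n + n) - edges i (q * n)))"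
    by (intro mult_right_mono Suc.IH Suc.prems) auto
  also have "\<dots> = exp (max_rate n * edges i (q * n + n))" by (simp add: exp_add[symmetric] algebra_simps)
  finally show ?case by (simp add: add.commute)
qed (simp add: edges_0)

lemma lab_count_mult_ge: "1 \<le> n \<Longrightarrow> i < k \<Longrightarrow> exp (min_rate n * edges i (q * n)) \<le> real (lab_count i (q * n) a)"
proof (induction q arbitrary: i a)
  case (Suc q)
  have "exp (min_rate n * edges i (q * n + n)) = exp (min_rate n * edges i (q * n)) * exp (min_rate n * (edges i (q * n + n) - edges i (q * n)))"
    by (simp add: exp_add[symmetric] algebra_simps)
  also have "\<dots> \<le> real (lab_count i (q * n) a) * exp (min_rate n * (edges i (q * n + n) - edges i (q * n)))"
    by (intro mult_right_mono Suc.IH Suc.prems) auto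
  also have "\<dots> \<le> real (lab_count i (q * n + n) a)"
    by (rule lab_count_graft_ge[OF lab_count_ge_min_rate[OF Suc.prems(1)] Suc.prems(2)])
  finally show ?case by (simp add: add.commute)
qed (simp add: edges_0)

text \<open>Write \<open>N = s + q n\<close> with \<open>s < n\<close>: the bottom \<open>q n\<close> levels are controlled by the rates at \<open>n\<close>,
  the top \<open>s\<close> levels contribute at most \<open>ln CARD('a)\<close> per edge.\<close>

lemma ln_lab_count_le_max_rate:
  assumes n: "1 \<le> n" "n \<le> N" and i: "i < k"
  shows "ln (real (lab_count i N a)) \<le> max_rate n * edges i N + ln (real CARD('a)) * total_edges n"
proof -
  define s q where "s = N mod n" and "q = N div n"
  have N: "N = s + q * n" and "s < n" using n by (simp_all add: s_def q_def)
  then have s: "edges i s \<le> total_edges n"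
    using edges_mono[of s n i] edges_le_total_edges[OF i] by (meson less_imp_le order_trans)
  have "real (lab_count i (s + q * n) a) \<le> real (lab_count i s a) * exp (max_rate n * (edges i (s + q * n) - edges i s))"
    by (rule lab_count_graft_le[OF lab_count_mult_le[OF n(1)] i])
  also have "\<dots> \<le> exp (edges i s * ln (real CARD('a))) * exp (max_rate n * (edges i (s + q * n) - edges i s))"
    by (intro mult_right_mono lab_count_le i) auto
  also have "\<dots> \<le> exp (max_rate n * edges i N + ln (real CARD('a)) * total_edges n)"
    using mult_right_mono[OF s, of "ln (real CARD('a))"]
      mult_nonneg_nonneg[OF edges_nonneg[OF i, of s] max_rate_nonneg[OF n(1)]]
    by (simp add: exp_add[symmetric] algebra_simps N)
  finally show ?thesis using N by (simp add: ln_lab_count_le_iff[OF i])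
qed

lemma ln_lab_count_ge_min_rate:
  assumes n: "1 \<le> n" "n \<le> N" and i: "i < k"
  shows "min_rate n * edges i N - ln (real CARD('a)) * total_edges n \<le> ln (real (lab_count i N a))"
proof -
  define s q where "s = N mod n" and "q = N div n"
  have N: "N = s + q * n" and "s < n" using n by (simp_all add: s_def q_def)
  then have s: "edges i s \<le> total_edges n"
    using edges_mono[of s n i] edges_le_total_edges[OF i] by (meson less_imp_le order_trans)
  have "min_rate n * edges i s \<le> ln (real CARD('a)) * total_edges n"
    using min_rate_le_max_rate[of n] max_rate_le[OF n(1)] edges_nonneg[OF i, of s] s
    by (intro mult_mono) auto
  then have "exp (min_rate n * edges i N - ln (real CARD('a)) * total_edges n) \<le> 1 * exp (min_rate n * (edges i (s + q * n) - edges i s))"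
    using N by (simp add: algebra_simps)
  also have "\<dots> \<le> real (lab_count i s a) * exp (min_rate n * (edges i (s + q * n) - edges i s))"
    using lab_count_pos[OF i, of s a] by (intro mult_right_mono) auto
  also have "\<dots> \<le> real (lab_count i (s + q * n) a)"
    by (rule lab_count_graft_ge[OF lab_count_mult_ge[OF n(1)] i])
  finally show ?thesis using N by (simp add: ln_lab_count_ge_iff[OF i])
qed

lemma max_rate_almost_decreasing:
  assumes n: "1 \<le> n" "n \<le> N"
  shows "max_rate N \<le> max_rate n + ln (real CARD('a)) * total_edges n / real N"
proof -
  obtain i a where i: "i < k" "max_rate N = rate i N a" using max_rate_attained by blast
  have E: "0 < edges i N" "real N \<le> edges i N" using edges_pos[OF i(1)] edges_ge[OF i(1)] n by auto
  have "max_rate N \<le> (max_rate n * edges i N + ln (real CARD('a)) * total_edges n) / edges i N"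
    using i ln_lab_count_le_max_rate[OF n i(1), of a] E by (simp add: rate_def divide_right_mono)
  also have "\<dots> = max_rate n + ln (real CARD('a)) * total_edges n / edges i N"
    using E by (simp add: field_simps)
  also have "\<dots> \<le> max_rate n + ln (real CARD('a)) * total_edges n / real N"
    using E n total_edges_nonneg[of n] by (intro add_left_mono divide_left_mono) auto
  finally show ?thesis .
qed

lemma min_rate_almost_increasing:
  assumes n: "1 \<le> n" "n \<le> N"
  shows "min_rate n - ln (real CARD('a)) * total_edges n / real N \<le> min_rate N"
proof -
  obtain i a where i: "i < k" "min_rate N = rate i N a" using min_rate_attained by blast
  have E: "0 < edges i N" "real N \<le> edges i N" using edges_pos[OF i(1)] edges_ge[OF i(1)] n by auto
  have "min_rate n - ln (real CARD('a)) * total_edges n / real N \<le> min_rate n - ln (real CARD('a)) * total_edges n / edges i N"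
    using E n total_edges_nonneg[of n] by (intro diff_left_mono divide_left_mono) auto
  also have "\<dots> = (min_rate n * edges i N - ln (real CARD('a)) * total_edges n) / edges i N"
    using E by (simp add: field_simps)
  also have "\<dots> \<le> min_rate N"
    using i ln_lab_count_ge_min_rate[OF n i(1), of a] E by (simp add: rate_def divide_right_mono)
  finally show ?thesis .
qed

lemma convergent_max_rate: "convergent max_rate"
  using tendsto_Inf_if_almost_decreasing[OF max_rate_almost_decreasing max_rate_nonneg]
  by (auto simp: convergent_def)

lemma convergent_min_rate: "convergent min_rate"
proof -
  have "(\<lambda>n. - min_rate n) \<longlonglongrightarrow> (INF n\<in>{1..}. - min_rate n)"
    using min_rate_almost_increasing order_trans[OF min_rate_le_max_rate max_rate_le]
    by (intro tendsto_Inf_if_almost_decreasing[where e = "\<lambda>n. ln (real CARD('a)) * total_edges n"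
          and b = "- ln (real CARD('a))"]) (auto simp: algebra_simps intro: order_trans)
  then show ?thesis
    using tendsto_minus[of "\<lambda>n. - min_rate n"] by (auto simp: convergent_def)
qed

definition mix_time :: nat where
  "mix_time = (SOME r. 0 < r \<and> (\<forall>i<k. \<forall>j<k. 0 < mpow {..<k} K r i j) \<and> (\<forall>a b. 0 < mpow UNIV A r a b))"

lemma mix_time: "0 < mix_time" "\<And>i j. i < k \<Longrightarrow> j < k \<Longrightarrow> 0 < mpow {..<k} K mix_time i j"
  "\<And>a b. 0 < mpow UNIV A mix_time a b"
proof -
  obtain p\<^sub>1 where p\<^sub>1: "\<forall>m\<ge>p\<^sub>1. \<forall>i\<in>{..<k}. \<forall>j\<in>{..<k}. 0 < mpow {..<k} K m i j" "0 < p\<^sub>1"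
    using primitive_on_eventually_pos[OF K_primitive] by auto
  obtain p\<^sub>2 where p\<^sub>2: "\<forall>m\<ge>p\<^sub>2. \<forall>i\<in>UNIV. \<forall>j\<in>UNIV. 0 < mpow UNIV A m i j"
    using primitive_on_eventually_pos[OF A_primitive] by auto
  have "\<exists>r. 0 < r \<and> (\<forall>i<k. \<forall>j<k. 0 < mpow {..<k} K r i j) \<and> (\<forall>a b. 0 < mpow UNIV A r a b)"
    using p\<^sub>1 p\<^sub>2 by (intro exI[of _ "max p\<^sub>1 p\<^sub>2"]) auto
  from someI_ex[OF this] show "0 < mix_time" "\<And>i j. i < k \<Longrightarrow> j < k \<Longrightarrow> 0 < mpow {..<k} K mix_time i j"
    "\<And>a b. 0 < mpow UNIV A mix_time a b"
    unfolding mix_time_def by blast+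
qed

abbreviation mix_factor :: real where
  "mix_factor \<equiv> (2 * real k) ^ (2 * mix_time)"

lemma mix_factor_ge_1: "1 \<le> mix_factor"
  using k_pos by (intro one_le_power) simp

lemma mix_factor_pos: "0 < mix_factor"
  using mix_factor_ge_1 by linarith

lemma edges_le_mix_factor:
  assumes n: "mix_time + 1 \<le> n" and i: "i < k" and j: "j < k"
  shows "edges i (mix_time + n) \<le> mix_factor * edges j n"
proof -
  define m where "m = n - mix_time"
  have m: "1 \<le> m" "n = m + mix_time" using n by (auto simp: m_def)
  have "edges l m \<le> edges j n" if "l < k" for l
    using edges_mpow_le[OF j that mix_time(2)[OF j that], of m] m(2) by (simp add: add.commute)
  then have "edges i (m + 2 * mix_time) \<le> mix_factor * edges j n"
    by (rule edges_growth[OF m(1) _ i])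
  moreover have "mix_time + n = m + 2 * mix_time" using m(2) by simp
  ultimately show ?thesis by (simp only:)
qed

text \<open>Every subtree of depth \<open>mix_time + n\<close> contains a copy of the depth-\<open>n\<close> subtree of maximal rate,
  carrying at least the fraction \<open>1 / mix_factor\<close> of its edges.\<close>

lemma min_rate_mix:
  assumes n: "mix_time + 1 \<le> n"
  shows "min_rate n + (max_rate n - min_rate n) / mix_factor
    - ln (real CARD('a)) * total_edges mix_time / real (mix_time + n) \<le> min_rate (mix_time + n)"
proof -
  let ?r = mix_time and ?C = "ln (real CARD('a))"
  have n1: "1 \<le> n" using n by simp
  obtain j\<^sub>0 b\<^sub>0 where j\<^sub>0: "j\<^sub>0 < k" "max_rate n = rate j\<^sub>0 n b\<^sub>0" using max_rate_attained by blast
  obtain i a where i: "i < k" "min_rate (?r + n) = rate i (?r + n) a" using min_rate_attained by blast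
  let ?E = "edges i (?r + n)"
  have E: "0 < ?E" "real (?r + n) \<le> ?E" using edges_pos[OF i(1), of "?r + n"] edges_ge[OF i(1), of "?r + n"] n by auto
  have ej: "0 < edges j\<^sub>0 n" using edges_pos[OF j\<^sub>0(1) n1] .
  have "real (lab_count j\<^sub>0 n b\<^sub>0) * exp (min_rate n * (?E - edges i ?r - edges j\<^sub>0 n)) \<le> real (lab_count i (?r + n) a)"
    by (rule lab_count_path_ge[OF lab_count_ge_min_rate[OF n1] j\<^sub>0(1) i(1) mix_time(2)[OF i(1) j\<^sub>0(1)] mix_time(3)])
  then have "max_rate n * edges j\<^sub>0 n + min_rate n * (?E - edges i ?r - edges j\<^sub>0 n) \<le> ln (real (lab_count i (?r + n) a))"
    using j\<^sub>0 ej lab_count_pos[OF j\<^sub>0(1), of n b\<^sub>0]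
    by (simp add: ln_lab_count_ge_iff[OF i(1)] rate_def exp_add)
  moreover have "(max_rate n - min_rate n) * (?E / mix_factor) \<le> (max_rate n - min_rate n) * edges j\<^sub>0 n"
    using edges_le_mix_factor[OF n i(1) j\<^sub>0(1)] mix_factor_ge_1 min_rate_le_max_rate[of n]
    by (intro mult_left_mono) (auto simp: divide_le_eq mult.commute)
  moreover have "min_rate n * edges i ?r \<le> ?C * total_edges ?r"
    using min_rate_le_max_rate[of n] max_rate_le[OF n1] edges_nonneg[OF i(1), of ?r]
      edges_le_total_edges[OF i(1), of ?r] min_rate_nonneg[OF n1]
    by (intro mult_mono) auto
  ultimately have bound: "min_rate n * ?E + (max_rate n - min_rate n) * (?E / mix_factor) - ?C * total_edges ?r
      \<le> ln (real (lab_count i (?r + n) a))"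
    by (simp add: algebra_simps)
  have "min_rate n + (max_rate n - min_rate n) / mix_factor - ?C * total_edges ?r / real (?r + n)
      \<le> min_rate n + (max_rate n - min_rate n) / mix_factor - ?C * total_edges ?r / ?E"
    using E total_edges_nonneg[of ?r] n by (intro diff_left_mono divide_left_mono) auto
  also have "\<dots> = (min_rate n * ?E + (max_rate n - min_rate n) * (?E / mix_factor) - ?C * total_edges ?r) / ?E"
    using E by (simp add: field_simps)
  also have "\<dots> \<le> min_rate (?r + n)"
    using bound E i(2) by (simp add: rate_def divide_right_mono)
  finally show ?thesis .
qed

definition entropy :: real where
  "entropy = lim max_rate"

lemma max_rate_tendsto: "max_rate \<longlonglongrightarrow> entropy"
  using convergent_max_rate by (simp add: entropy_def convergent_LIMSEQ_iff)

lemma min_rate_tendsto: "min_rate \<longlonglongrightarrow> entropy"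
proof -
  have min: "min_rate \<longlonglongrightarrow> lim min_rate" using convergent_min_rate by (simp add: convergent_LIMSEQ_iff)
  have "(\<lambda>n. min_rate n + (max_rate n - min_rate n) / mix_factor
      - ln (real CARD('a)) * total_edges mix_time / real (n + mix_time))
      \<longlonglongrightarrow> lim min_rate + (entropy - lim min_rate) / mix_factor - 0"
    by (intro tendsto_intros min max_rate_tendsto LIMSEQ_ignore_initial_segment[OF lim_const_over_n])
      (use k_pos in simp)
  moreover have "(\<lambda>n. min_rate (n + mix_time)) \<longlonglongrightarrow> lim min_rate"
    by (rule LIMSEQ_ignore_initial_segment[OF min])
  ultimately have "lim min_rate + (entropy - lim min_rate) / mix_factor - 0 \<le> lim min_rate"
    using min_rate_mix eventually_ge_at_top[of "mix_time + 1"]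
    by (intro LIMSEQ_le) (auto simp: add.commute eventually_sequentially)
  then have "entropy \<le> lim min_rate" using mix_factor_pos by (simp add: divide_le_0_iff)
  moreover have "lim min_rate \<le> entropy"
    using min_rate_le_max_rate by (intro LIMSEQ_le[OF min max_rate_tendsto]) auto
  ultimately show ?thesis using min by simp
qed

lemma entropy_nonneg: "0 \<le> entropy"
  using max_rate_nonneg by (intro LIMSEQ_le_const[OF max_rate_tendsto]) auto

section \<open>Entropy of stems and balls\<close>

lemma card_labelings_subtree_le:
  assumes "0 < e"
  obtains c where "0 \<le> c"
    "\<And>z d. z < k \<Longrightarrow> real (card (labelings (subtree z d))) \<le> exp ((entropy + e) * card (subtree z d) + c)"
proof -
  obtain N where N: "\<And>n. N \<le> n \<Longrightarrow> max_rate n < entropy + e"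
    using order_tendstoD(2)[OF max_rate_tendsto, of "entropy + e"] assms by (auto simp: eventually_sequentially)
  define M where "M = max N 1"
  define c where "c = ln (real CARD('a)) * (1 + total_edges M)"
  have he: "0 \<le> entropy + e" using entropy_nonneg assms by simp
  have each: "real (lab_count z d a) \<le> exp ((entropy + e) * edges z d + ln (real CARD('a)) * total_edges M)"
    if z: "z < k" for z d a
  proof (cases "M \<le> d")
    case True
    then have "max_rate d * edges z d \<le> (entropy + e) * edges z d"
      using N[of d] edges_nonneg[OF z] by (intro mult_right_mono) (auto simp: M_def)
    moreover have "0 \<le> ln (real CARD('a)) * total_edges M" using total_edges_nonneg[of M] by simp
    ultimately show ?thesis
      using lab_count_le_max_rate[OF _ z, of d a] True by (simp add: M_def) (smt (verit) exp_mono)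
  next
    case False
    then have "edges z d * ln (real CARD('a)) \<le> total_edges M * ln (real CARD('a))"
      using edges_mono[of d M z] edges_le_total_edges[OF z, of M] by (intro mult_right_mono) auto
    then show ?thesis
      using lab_count_le[OF z, of d a] mult_nonneg_nonneg[OF he edges_nonneg[OF z, of d]]
      by (smt (verit) exp_mono mult.commute)
  qed
  have "real (card (labelings (subtree z d))) \<le> exp ((entropy + e) * card (subtree z d) + c)" if z: "z < k" for z d
  proof -
    have "real (card (labelings (subtree z d))) = (\<Sum>a\<in>UNIV. real (lab_count z d a))"
      using card_labelings_subtree[OF z, of d] by simp
    also have "\<dots> \<le> real CARD('a) * exp ((entropy + e) * edges z d + ln (real CARD('a)) * total_edges M)"
      by (rule sum_bounded_above) (rule each[OF z])
    also have "\<dots> = exp (ln (real CARD('a)) + (entropy + e) * edges z d + ln (real CARD('a)) * total_edges M)"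
      by (simp add: exp_add)
    also have "\<dots> \<le> exp ((entropy + e) * card (subtree z d) + c)"
      using he by (simp add: c_def edges_def algebra_simps)
    finally show ?thesis .
  qed
  moreover have "0 \<le> c" using total_edges_nonneg[of M] by (simp add: c_def)
  ultimately show ?thesis using that by blast
qed

definition no_cancellation :: bool where
  "no_cancellation \<longleftrightarrow> (\<forall>i<k. \<forall>j<k. K i j \<noteq> 0)"

text \<open>The exponent lost to cancellations in shifted forests; it is only linear in the depth, which is
  negligible because trees grow exponentially as soon as cancellations are possible.\<close>

definition penalty :: "nat \<Rightarrow> real" where
  "penalty d = (if no_cancellation then 1 else real d + 1)"

lemma card_labelings_shifted_forest_le:
  assumes "0 < e"
  obtains c where "0 \<le> c" "\<And>\<sigma> Z d. \<sigma> \<in> W \<Longrightarrow> Z \<subseteq> {..<k} \<Longrightarrow>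
    real (card (labelings (shifted_forest \<sigma> Z d))) \<le> exp ((entropy + e) * real (\<Sum>z\<in>Z. card (subtree z d)) + c * penalty d)"
proof -
  obtain c\<^sub>1 where c\<^sub>1: "0 \<le> c\<^sub>1"
    "\<And>z d. z < k \<Longrightarrow> real (card (labelings (subtree z d))) \<le> exp ((entropy + e) * card (subtree z d) + c\<^sub>1)"
    using card_labelings_subtree_le[OF assms] by blast
  define c where "c = ln (real CARD('a)) + 2 * real k * c\<^sub>1"
  have he: "0 \<le> entropy + e" using entropy_nonneg assms by simp
  have lnA: "0 \<le> ln (real CARD('a))" by simp
  have "real (card (labelings (shifted_forest \<sigma> Z d))) \<le> exp ((entropy + e) * real (\<Sum>z\<in>Z. card (subtree z d)) + c * penalty d)"
    if \<sigma>: "\<sigma> \<in> W" and Z: "Z \<subseteq> {..<k}" for \<sigma> Z d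
  proof -
    have Zk: "real (card Z) * c\<^sub>1 \<le> real k * c\<^sub>1"
      using card_mono[OF _ Z] c\<^sub>1(1) by (intro mult_right_mono) auto
    show ?thesis
    proof (cases no_cancellation)
      case True
      then have "real (card (labelings (shifted_forest \<sigma> Z d))) \<le> exp ((entropy + e) * real (\<Sum>z\<in>Z. card (subtree z d)) + real (card Z) * c\<^sub>1)"
        using card_labelings_branches[OF he c\<^sub>1] shifted_forest_eq_branches[OF _ \<sigma> Z] Z
        by (simp add: no_cancellation_def)
      also have "\<dots> \<le> exp ((entropy + e) * real (\<Sum>z\<in>Z. card (subtree z d)) + c * penalty d)"
      proof -
        have "real (card Z) * c\<^sub>1 \<le> c"
          unfolding c_def using Zk lnA mult_nonneg_nonneg[OF of_nat_0_le_iff c\<^sub>1(1), of k] by linarith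
        then show ?thesis using True by (simp add: penalty_def)
      qed
      finally show ?thesis .
    next
      case False
      have "real (card (labelings (shifted_forest \<sigma> Z d))) \<le> exp ((entropy + e) * real (\<Sum>z\<in>Z. card (subtree z d)) + real (card Z) * c\<^sub>1 + real (d + 1) * (ln (real CARD('a)) + real k * c\<^sub>1))"
        by (rule card_labelings_shifted_forest[OF he c\<^sub>1 Z])
      also have "\<dots> \<le> exp ((entropy + e) * real (\<Sum>z\<in>Z. card (subtree z d)) + c * penalty d)"
        using False Zk mult_nonneg_nonneg[OF c\<^sub>1(1), of "real d * real k"]
        by (simp add: penalty_def c_def algebra_simps)
      finally show ?thesis .
    qed
  qed
  moreover have "0 \<le> c" using c\<^sub>1(1) by (simp add: c_def)
  ultimately show ?thesis using that by blast
qed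

lemma subtree_at_top: "i < k \<Longrightarrow> filterlim (\<lambda>n. real (card (subtree i n))) at_top sequentially"
proof -
  assume "i < k"
  then have "real n \<le> real (card (subtree i n))" for n using card_subtree_ge[of i n] by linarith
  then show ?thesis by (intro filterlim_at_top_mono[OF filterlim_real_sequentially] always_eventually allI)
qed

lemma card_Delta_Suc: "real (card (Delta k K (Suc n))) = 1 + (\<Sum>l<k. real (card (subtree l n)))"
  by (simp add: Delta_Suc card_tree)

lemma card_Delta_Suc_le:
  assumes n: "mix_time + 1 \<le> n" and i: "i < k"
  shows "real (card (Delta k K (Suc n))) \<le> (1 + real k * mix_factor) * real (card (subtree i n))"
proof -
  have "real (card (subtree l n)) \<le> mix_factor * real (card (subtree i n))" if l: "l < k" for l
    using edges_mono[of n "mix_time + n" l] edges_le_mix_factor[OF n l i] mix_factor_ge_1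
    by (simp add: edges_def algebra_simps)
  then have "(\<Sum>l<k. real (card (subtree l n))) \<le> real k * mix_factor * real (card (subtree i n))"
    using sum_bounded_above[of "{..<k}" "\<lambda>l. real (card (subtree l n))"] by (simp add: mult.assoc)
  moreover have "1 \<le> real (card (subtree i n))" using card_subtree_ge[OF i, of n] by simp
  moreover have "0 \<le> (\<Sum>l<k. real (card (subtree l n)))" by (intro sum_nonneg) simp
  ultimately show ?thesis by (simp add: card_Delta_Suc algebra_simps)
qed

lemma ln_card_Delta_over_subtree:
  assumes i: "i < k"
  shows "(\<lambda>n. ln (real (card (Delta k K (Suc n)))) / real (card (subtree i n))) \<longlonglongrightarrow> 0"
proof (rule tendsto_sandwich[OF _ _ tendsto_const])
  let ?s = "\<lambda>n. real (card (subtree i n))" and ?C = "1 + real k * mix_factor"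
  have s: "1 \<le> ?s n" for n using card_subtree_ge[OF i, of n] by simp
  have C: "1 \<le> ?C" using mix_factor_pos by simp
  have D: "1 \<le> real (card (Delta k K (Suc n)))" for n
    using card_Delta_Suc[of n] sum_nonneg[of "{..<k}" "\<lambda>l. real (card (subtree l n))"] by simp
  show "\<forall>\<^sub>F n in sequentially. 0 \<le> ln (real (card (Delta k K (Suc n)))) / ?s n"
    using D s by (auto intro: always_eventually)
  show "\<forall>\<^sub>F n in sequentially. ln (real (card (Delta k K (Suc n)))) / ?s n \<le> ln ?C / ?s n + ln (?s n) / ?s n"
  proof (rule eventually_sequentiallyI[of "mix_time + 1"])
    fix n assume "mix_time + 1 \<le> n"
    then have "ln (real (card (Delta k K (Suc n)))) \<le> ln (?C * ?s n)"
      using D[of n] card_Delta_Suc_le[OF _ i] by (intro ln_mono) auto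
    also have "\<dots> = ln ?C + ln (?s n)" by (rule ln_mult_pos) (use s[of n] C in linarith)+
    finally show "ln (real (card (Delta k K (Suc n)))) / ?s n \<le> ln ?C / ?s n + ln (?s n) / ?s n"
      using s[of n] by (simp add: add_divide_distrib[symmetric] divide_right_mono)
  qed
  show "(\<lambda>n. ln ?C / ?s n + ln (?s n) / ?s n) \<longlonglongrightarrow> 0"
    using tendsto_add[OF real_tendsto_divide_at_top[OF tendsto_const subtree_at_top[OF i]]
        filterlim_compose[OF ln_x_over_x_tendsto_0 subtree_at_top[OF i]]]
    by (simp add: o_def)
qed

lemma two_le_k_if_cancellation: "\<not> no_cancellation \<Longrightarrow> 2 \<le> k"
proof (rule ccontr)
  assume "\<not> no_cancellation" "\<not> 2 \<le> k"
  then have k: "k = 1" using k_pos by simp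
  obtain j where "j \<in> succs 0" using succs_nonempty[of 0] k_pos by blast
  then have "j < k" "K 0 j \<noteq> 0" by (simp_all add: succs_def)
  then have "K 0 0 \<noteq> 0" using k by simp
  then have no_cancellation using k unfolding no_cancellation_def by simp
  then show False using \<open>\<not> no_cancellation\<close> by blast
qed

lemma card_subtree_ge_power: "2 \<le> k \<Longrightarrow> i < k \<Longrightarrow> 2 ^ q \<le> real (card (subtree i (q * mix_time + s)))"
proof (induction q arbitrary: i)
  case 0
  then show ?case using card_subtree_ge[of i s] by simp
next
  case (Suc q)
  have "2 ^ Suc q \<le> (\<Sum>l<k. (2::real) ^ q)" using Suc.prems(1) by simp
  also have "\<dots> \<le> (\<Sum>l<k. real (mpow {..<k} K mix_time i l) * real (card (subtree l (q * mix_time + s))))"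
  proof (intro sum_mono)
    fix l assume "l \<in> {..<k}"
    then have "1 \<le> real (mpow {..<k} K mix_time i l)" "2 ^ q \<le> real (card (subtree l (q * mix_time + s)))"
      using mix_time(2)[OF Suc.prems(2), of l] Suc.IH[OF Suc.prems(1)] by auto
    then show "2 ^ q \<le> real (mpow {..<k} K mix_time i l) * real (card (subtree l (q * mix_time + s)))"
      using mult_mono[of "1::real" _ "2 ^ q"] by simp
  qed
  also have "\<dots> \<le> real (card (subtree i (Suc q * mix_time + s)))"
    using card_subtree_mpow[OF Suc.prems(2)] by (simp add: add.assoc)
  finally show ?case .
qed

lemma linear_over_subtree:
  assumes k: "2 \<le> k" and i: "i < k"
  shows "(\<lambda>n. (real n + 1) / real (card (subtree i n))) \<longlonglongrightarrow> 0"
proof (rule tendsto_sandwich[OF _ _ tendsto_const])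
  let ?r = mix_time
  have "(\<lambda>q. real ?r * ((real q + 1) / 2 ^ q)) \<longlonglongrightarrow> real ?r * 0"
    by (intro tendsto_mult tendsto_const) real_asymp
  then show "(\<lambda>n. real ?r * ((real (n div ?r) + 1) / 2 ^ (n div ?r))) \<longlonglongrightarrow> 0"
    using filterlim_compose[OF _ filterlim_at_top_div_const_nat[OF mix_time(1)]] by (simp add: o_def)
  show "\<forall>\<^sub>F n in sequentially. 0 \<le> (real n + 1) / real (card (subtree i n))" by simp
  show "\<forall>\<^sub>F n in sequentially. (real n + 1) / real (card (subtree i n)) \<le> real ?r * ((real (n div ?r) + 1) / 2 ^ (n div ?r))"
  proof (rule always_eventually, rule allI)
    fix n
    have n: "n = (n div ?r) * ?r + n mod ?r" by simp
    have "n + 1 \<le> ?r * (n div ?r) + ?r"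
      using mult_div_mod_eq[of ?r n] mod_less_divisor[OF mix_time(1), of n] by linarith
    then have "real (n + 1) \<le> real (?r * (n div ?r) + ?r)" by (simp only: of_nat_le_iff)
    then have "real n + 1 \<le> real ?r * (real (n div ?r) + 1)" by (simp add: algebra_simps)
    moreover have "2 ^ (n div ?r) \<le> real (card (subtree i n))"
      using card_subtree_ge_power[OF k i, of "n div ?r" "n mod ?r"] n by simp
    ultimately show "(real n + 1) / real (card (subtree i n)) \<le> real ?r * ((real (n div ?r) + 1) / 2 ^ (n div ?r))"
      by (simp add: frac_le)
  qed
qed

lemma penalty_over_subtree: "i < k \<Longrightarrow> (\<lambda>n. penalty n / real (card (subtree i n))) \<longlonglongrightarrow> 0"
  using real_tendsto_divide_at_top[OF tendsto_const subtree_at_top] linear_over_subtree two_le_k_if_cancellation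
  by (cases no_cancellation) (simp_all add: penalty_def)

lemma card_Delta_pos: "0 < card (Delta k K n)"
  using finite_Delta[of n] by (auto simp: card_gt_0_iff Delta_def semigrp_def intro!: exI[of _ "[]"])

lemma gmul_image_tree: "gmul K \<sigma> ` tree Z n = insert \<sigma> (shifted_forest \<sigma> Z n)"
proof -
  have "tree Z n = insert [] ((\<lambda>(z, q). z # q) ` (SIGMA z:Z. subtree z n))" by (auto simp: tree_def)
  then show ?thesis by (simp add: shifted_forest_def image_image case_prod_unfold)
qed

lemma p_stem_le:
  assumes i: "i < k"
  shows "p_stem k K X [i] n \<le> (\<Sum>\<sigma>\<in>Delta k K (Suc n). card (labelings (shifted_forest \<sigma> {i} n)))"
proof -
  have "p_stem k K X [i] n \<le> (\<Sum>\<sigma>\<in>Delta k K (Suc n). card (labelings (gmul K \<sigma> ` Delta_bar k K [i] n)))"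
    unfolding p_stem_def using i
  proof (intro card_accepted_patterns_le)
    show "Delta_bar k K [i] n \<subseteq> W"
      using i by (auto simp: Delta_bar_singleton subtree_def semigrp_def is_min_rep_Cons)
    show "finite (Delta_bar k K [i] n)" using i by (simp add: Delta_bar_singleton)
  qed (use i in \<open>auto simp: Delta_bar_singleton subtree_def\<close>)
  also have "\<dots> = (\<Sum>\<sigma>\<in>Delta k K (Suc n). card (labelings (shifted_forest \<sigma> {i} n)))"
    using i by (simp add: Delta_bar_singleton shifted_forest_singleton image_image)
  finally show ?thesis .
qed

lemma p_count_Suc_le:
  "p_count k K X (Suc n) \<le> (\<Sum>\<sigma>\<in>Delta k K (Suc n). card (labelings (insert \<sigma> (shifted_forest \<sigma> {..<k} n))))"
proof -
  have "p_count k K X (Suc n) \<le> (\<Sum>\<sigma>\<in>Delta k K (Suc n). card (labelings (gmul K \<sigma> ` Delta k K (Suc n))))"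
    unfolding p_count_def by (intro card_accepted_patterns_le finite_Delta) (auto simp: Delta_def)
  also have "\<dots> = (\<Sum>\<sigma>\<in>Delta k K (Suc n). card (labelings (insert \<sigma> (shifted_forest \<sigma> {..<k} n))))"
    by (simp add: Delta_Suc gmul_image_tree)
  finally show ?thesis .
qed

lemma ratio_tendsto_entropy:
  fixes x S E :: "nat \<Rightarrow> real"
  assumes S: "\<And>n. 0 < S n" and E: "(\<lambda>n. E n / S n) \<longlonglongrightarrow> 1"
    and lower: "\<And>n. 1 \<le> n \<Longrightarrow> min_rate n * E n \<le> x n"
    and upper: "\<And>e. 0 < e \<Longrightarrow> \<exists>err. (\<lambda>n. err n / S n) \<longlonglongrightarrow> 0 \<and> (\<forall>n. x n \<le> (entropy + e) * S n + err n)"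
  shows "(\<lambda>n. x n / S n) \<longlonglongrightarrow> entropy"
proof (rule tendsto_squeeze_eps)
  show "(\<lambda>n. min_rate n * (E n / S n)) \<longlonglongrightarrow> entropy"
    using tendsto_mult[OF min_rate_tendsto E] by simp
  show "\<forall>\<^sub>F n in sequentially. min_rate n * (E n / S n) \<le> x n / S n"
    using eventually_ge_at_top[of "1::nat"]
  proof eventually_elim
    fix n :: nat assume "1 \<le> n"
    then show "min_rate n * (E n / S n) \<le> x n / S n"
      using divide_right_mono[OF lower, of n "S n"] S[of n] by simp
  qed
next
  fix e :: real assume "0 < e"
  then obtain err where err: "(\<lambda>n. err n / S n) \<longlonglongrightarrow> 0" "\<And>n. x n \<le> (entropy + e) * S n + err n"
    using upper by blast
  have "x n / S n \<le> entropy + e + err n / S n" for n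
    using divide_right_mono[OF err(2)[of n], of "S n"] S[of n] by (simp add: add_divide_distrib)
  moreover have "(\<lambda>n. entropy + e + err n / S n) \<longlonglongrightarrow> entropy + e + 0"
    by (intro tendsto_intros err(1))
  ultimately show "\<exists>u. u \<longlonglongrightarrow> entropy + e \<and> (\<forall>\<^sub>F n in sequentially. x n / S n \<le> u n)"
    by (intro exI[of _ "\<lambda>n. entropy + e + err n / S n"]) (simp add: always_eventually)
qed

lemma p_stem_ge_1: "i < k \<Longrightarrow> 1 \<le> p_stem k K X [i] n"
  using lab_count_pos[of i n undefined] lab_count_le_p_stem[of i n undefined] by linarith

lemma ln_p_stem_ge: "1 \<le> n \<Longrightarrow> i < k \<Longrightarrow> min_rate n * edges i n \<le> ln (real (p_stem k K X [i] n))"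
  using lab_count_ge_min_rate[of n i undefined] lab_count_le_p_stem[of i n undefined] p_stem_ge_1[of i n]
  by (subst ln_ge_iff) auto

lemma ln_p_stem_le:
  assumes e: "0 < e" and i: "i < k"
  obtains c where "\<And>n. ln (real (p_stem k K X [i] n)) \<le>
    (entropy + e) * real (card (subtree i n)) + (ln (real (card (Delta k K (Suc n)))) + c * penalty n)"
proof -
  obtain c where c: "\<And>\<sigma> Z d. \<sigma> \<in> W \<Longrightarrow> Z \<subseteq> {..<k} \<Longrightarrow>
      real (card (labelings (shifted_forest \<sigma> Z d))) \<le> exp ((entropy + e) * real (\<Sum>z\<in>Z. card (subtree z d)) + c * penalty d)"
    using card_labelings_shifted_forest_le[OF e] by blast
  have bound: "ln (real (p_stem k K X [i] n)) \<le>
      ln (real (card (Delta k K (Suc n)))) + ((entropy + e) * real (card (subtree i n)) + c * penalty n)" for n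
  proof (rule ln_le_ln_mult_exp)
    show "0 < real (p_stem k K X [i] n)" using p_stem_ge_1[OF i, of n] by simp
    have "real (p_stem k K X [i] n) \<le> (\<Sum>\<sigma>\<in>Delta k K (Suc n). real (card (labelings (shifted_forest \<sigma> {i} n))))"
      using p_stem_le[OF i, of n] by (simp flip: of_nat_sum)
    also have "\<dots> \<le> real (card (Delta k K (Suc n))) * exp ((entropy + e) * real (card (subtree i n)) + c * penalty n)"
      using c[of _ "{i}" n] i by (intro sum_bounded_above) (auto simp: Delta_def)
    finally show "real (p_stem k K X [i] n) \<le> real (card (Delta k K (Suc n))) * exp ((entropy + e) * real (card (subtree i n)) + c * penalty n)" .
  qed (use card_Delta_pos in simp)
  show ?thesis
  proof (rule that)
    fix n show "ln (real (p_stem k K X [i] n)) \<le>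
      (entropy + e) * real (card (subtree i n)) + (ln (real (card (Delta k K (Suc n)))) + c * penalty n)"
      using bound[of n] by linarith
  qed
qed

lemma stem_ratio_tendsto:
  assumes i: "i < k"
  shows "(\<lambda>n. ln (real (p_stem k K X [i] n)) / real (card (Delta_bar k K [i] n))) \<longlonglongrightarrow> entropy"
proof -
  let ?s = "\<lambda>n. real (card (subtree i n))"
  have s: "0 < ?s n" for n using card_subtree_ge[OF i, of n] by linarith
  have "(\<lambda>n. ln (real (p_stem k K X [i] n)) / ?s n) \<longlonglongrightarrow> entropy"
  proof (rule ratio_tendsto_entropy[where E = "edges i", OF s])
    have "(\<lambda>n. 1 - 1 / ?s n) \<longlonglongrightarrow> 1 - 0"
      by (intro tendsto_intros real_tendsto_divide_at_top[OF tendsto_const subtree_at_top[OF i]])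
    moreover have "edges i n / ?s n = 1 - 1 / ?s n" for n
      using s[of n] Nil_in_subtree[OF i, of n] by (auto simp: edges_def diff_divide_distrib)
    ultimately show "(\<lambda>n. edges i n / ?s n) \<longlonglongrightarrow> 1" by simp
    show "min_rate n * edges i n \<le> ln (real (p_stem k K X [i] n))" if "1 \<le> n" for n
      using ln_p_stem_ge[OF that i] .
    fix e :: real assume "0 < e"
    then obtain c where "\<And>n. ln (real (p_stem k K X [i] n)) \<le>
        (entropy + e) * ?s n + (ln (real (card (Delta k K (Suc n)))) + c * penalty n)"
      using ln_p_stem_le[OF _ i] by blast
    moreover have "(\<lambda>n. (ln (real (card (Delta k K (Suc n)))) + c * penalty n) / ?s n) \<longlonglongrightarrow> 0"
      using tendsto_add[OF ln_card_Delta_over_subtree[OF i] tendsto_mult_left_zero[OF penalty_over_subtree[OF i], of c]]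
      by (simp add: add_divide_distrib ac_simps)
    ultimately show "\<exists>err. (\<lambda>n. err n / ?s n) \<longlonglongrightarrow> 0 \<and>
        (\<forall>n. ln (real (p_stem k K X [i] n)) \<le> (entropy + e) * ?s n + err n)"
      by (intro exI[of _ "\<lambda>n. ln (real (card (Delta k K (Suc n)))) + c * penalty n"]) simp
  qed
  then show ?thesis using i by (simp add: card_Delta_bar)
qed

lemma card_Delta_Suc_eq_total_edges: "real (card (Delta k K (Suc n))) = 1 + real k + total_edges n"
  by (simp add: card_Delta_Suc total_edges_def edges_def sum_subtractf)

lemma card_subtree_le_card_Delta_Suc: "i < k \<Longrightarrow> real (card (subtree i n)) \<le> real (card (Delta k K (Suc n)))"
  using card_Delta_Suc[of n] member_le_sum[of i "{..<k}" "\<lambda>l. real (card (subtree l n))"] by simp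

lemma Delta_Suc_at_top: "filterlim (\<lambda>n. real (card (Delta k K (Suc n)))) at_top sequentially"
  by (rule filterlim_at_top_mono[OF subtree_at_top[OF k_pos]])
    (use card_subtree_le_card_Delta_Suc[OF k_pos] in \<open>auto intro: always_eventually\<close>)

lemma penalty_over_Delta_Suc: "(\<lambda>n. penalty n / real (card (Delta k K (Suc n)))) \<longlonglongrightarrow> 0"
proof (rule tendsto_sandwich[OF _ _ tendsto_const penalty_over_subtree[OF k_pos]])
  have s: "0 < real (card (subtree 0 n))" for n using card_subtree_ge[OF k_pos, of n] by linarith
  have pen: "0 \<le> penalty n" for n by (simp add: penalty_def)
  show "\<forall>\<^sub>F n in sequentially. 0 \<le> penalty n / real (card (Delta k K (Suc n)))"
    using pen by (auto intro: always_eventually)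
  show "\<forall>\<^sub>F n in sequentially. penalty n / real (card (Delta k K (Suc n))) \<le> penalty n / real (card (subtree 0 n))"
  proof (intro always_eventually allI divide_left_mono pen)
    fix n
    show "real (card (subtree 0 n)) \<le> real (card (Delta k K (Suc n)))"
      by (rule card_subtree_le_card_Delta_Suc[OF k_pos])
    show "0 < real (card (Delta k K (Suc n))) * real (card (subtree 0 n))"
      using s[of n] card_Delta_pos[of "Suc n"] by simp
  qed
qed

lemma card_rooted_labelings_tree_ge:
  assumes n: "1 \<le> n"
  shows "exp (min_rate n * total_edges n) \<le> real (card (rooted_labelings (tree {..<k} n) a))"
proof -
  have "exp (min_rate n * total_edges n) = (\<Prod>l<k. exp (min_rate n * edges l n))"
    by (simp add: total_edges_def sum_distrib_left exp_sum)
  also have "\<dots> \<le> (\<Prod>l<k. \<Sum>b\<in>UNIV. real (A a b) * real (lab_count l n b))"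
  proof (intro prod_mono conjI)
    fix l assume l: "l \<in> {..<k}"
    obtain b where b: "A a b = 1" using A_row_exists by blast
    have "exp (min_rate n * edges l n) \<le> real (lab_count l n b)" using lab_count_ge_min_rate[OF n] l by simp
    also have "\<dots> \<le> (\<Sum>b\<in>UNIV. real (A a b) * real (lab_count l n b))"
      using lab_count_le_sum[OF b, of l n] by (simp flip: of_nat_mult of_nat_sum)
    finally show "exp (min_rate n * edges l n) \<le> (\<Sum>b\<in>UNIV. real (A a b) * real (lab_count l n b))" .
  qed simp
  also have "\<dots> = real (card (rooted_labelings (tree {..<k} n) a))"
    by (simp add: card_rooted_labelings_tree_eq_lab_count)
  finally show ?thesis .
qed

lemma p_count_Suc_ge_1: "1 \<le> p_count k K X (Suc n)"
proof -
  have "1 \<le> (\<Sum>b\<in>UNIV. A a b * lab_count l n b)" if "l < k" for a l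
  proof -
    obtain b where b: "A a b = 1" using A_row_exists by blast
    then show ?thesis using lab_count_pos[OF that, of n b] lab_count_le_sum[OF b, of l n] by linarith
  qed
  then have "1 \<le> (\<Prod>l<k. \<Sum>b\<in>UNIV. A undefined b * lab_count l n b)"
    by (intro prod_ge_1) simp
  then have "1 \<le> card (rooted_labelings (tree {..<k} n) undefined)"
    by (simp add: card_rooted_labelings_tree_eq_lab_count)
  then show ?thesis using card_rooted_labelings_le_p_count[of n undefined] by linarith
qed

lemma ln_p_count_Suc_ge: "1 \<le> n \<Longrightarrow> min_rate n * total_edges n \<le> ln (real (p_count k K X (Suc n)))"
  using card_rooted_labelings_tree_ge[of n undefined] card_rooted_labelings_le_p_count[of n undefined]
    p_count_Suc_ge_1[of n]
  by (subst ln_ge_iff) auto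

lemma ln_p_count_Suc_le:
  assumes e: "0 < e"
  obtains c where "\<And>n. ln (real (p_count k K X (Suc n))) \<le> (entropy + e) * real (card (Delta k K (Suc n))) +
    (ln (real (card (Delta k K (Suc n)))) + ln (real CARD('a)) + c * penalty n)"
proof -
  obtain c where c: "\<And>\<sigma> Z d. \<sigma> \<in> W \<Longrightarrow> Z \<subseteq> {..<k} \<Longrightarrow>
      real (card (labelings (shifted_forest \<sigma> Z d))) \<le> exp ((entropy + e) * real (\<Sum>z\<in>Z. card (subtree z d)) + c * penalty d)"
    using card_labelings_shifted_forest_le[OF e] by blast
  have he: "0 \<le> entropy + e" using entropy_nonneg e by simp
  have bound: "ln (real (p_count k K X (Suc n))) \<le> ln (real (card (Delta k K (Suc n)))) +
      (ln (real CARD('a)) + (entropy + e) * real (card (Delta k K (Suc n))) + c * penalty n)" for n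
  proof (rule ln_le_ln_mult_exp)
    let ?Y = "ln (real CARD('a)) + (entropy + e) * real (card (Delta k K (Suc n))) + c * penalty n"
    have "real (card (labelings (insert \<sigma> (shifted_forest \<sigma> {..<k} n)))) \<le> exp ?Y" if "\<sigma> \<in> Delta k K (Suc n)" for \<sigma>
    proof -
      have "real (card (labelings (insert \<sigma> (shifted_forest \<sigma> {..<k} n)))) \<le>
          real CARD('a) * real (card (labelings (shifted_forest \<sigma> {..<k} n)))"
        using card_labelings_insert[of "shifted_forest \<sigma> {..<k} n" \<sigma>] by (simp flip: of_nat_mult)
      also have "\<dots> \<le> real CARD('a) * exp ((entropy + e) * real (\<Sum>z<k. card (subtree z n)) + c * penalty n)"
        using c[of \<sigma> "{..<k}" n] that by (intro mult_left_mono) (auto simp: Delta_def)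
      also have "\<dots> \<le> exp ?Y"
        using he card_Delta_Suc[of n] by (simp add: exp_add mult_left_mono)
      finally show ?thesis .
    qed
    then have "(\<Sum>\<sigma>\<in>Delta k K (Suc n). real (card (labelings (insert \<sigma> (shifted_forest \<sigma> {..<k} n)))))
        \<le> real (card (Delta k K (Suc n))) * exp ?Y"
      by (rule sum_bounded_above)
    then show "real (p_count k K X (Suc n)) \<le> real (card (Delta k K (Suc n))) * exp ?Y"
      using p_count_Suc_le[of n] by (simp flip: of_nat_sum)
    show "0 < real (p_count k K X (Suc n))" using p_count_Suc_ge_1[of n] by simp
  qed (use card_Delta_pos in simp)
  show ?thesis
  proof (rule that)
    fix n show "ln (real (p_count k K X (Suc n))) \<le> (entropy + e) * real (card (Delta k K (Suc n))) +
      (ln (real (card (Delta k K (Suc n)))) + ln (real CARD('a)) + c * penalty n)"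
      using bound[of n] by linarith
  qed
qed

lemma count_ratio_tendsto:
  "(\<lambda>n. ln (real (p_count k K X n)) / real (card (Delta k K n))) \<longlonglongrightarrow> entropy"
proof (rule LIMSEQ_imp_Suc)
  let ?D = "\<lambda>n. real (card (Delta k K (Suc n)))"
  have D: "0 < ?D n" for n using card_Delta_pos[of "Suc n"] by simp
  show "(\<lambda>n. ln (real (p_count k K X (Suc n))) / ?D n) \<longlonglongrightarrow> entropy"
  proof (rule ratio_tendsto_entropy[where E = total_edges, OF D])
    have "(\<lambda>n. 1 - (1 + real k) / ?D n) \<longlonglongrightarrow> 1 - 0"
      by (intro tendsto_intros real_tendsto_divide_at_top[OF tendsto_const Delta_Suc_at_top])
    moreover have "total_edges n / ?D n = 1 - (1 + real k) / ?D n" for n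
      using D[of n] card_Delta_Suc_eq_total_edges[of n] by (simp add: field_simps)
    ultimately show "(\<lambda>n. total_edges n / ?D n) \<longlonglongrightarrow> 1" by simp
    show "min_rate n * total_edges n \<le> ln (real (p_count k K X (Suc n)))" if "1 \<le> n" for n
      using ln_p_count_Suc_ge[OF that] .
    fix e :: real assume "0 < e"
    then obtain c where "\<And>n. ln (real (p_count k K X (Suc n))) \<le>
        (entropy + e) * ?D n + (ln (?D n) + ln (real CARD('a)) + c * penalty n)"
      using ln_p_count_Suc_le by blast
    moreover have "(\<lambda>n. (ln (?D n) + ln (real CARD('a)) + c * penalty n) / ?D n) \<longlonglongrightarrow> 0"
      using tendsto_add[OF tendsto_add[OF filterlim_compose[OF ln_x_over_x_tendsto_0 Delta_Suc_at_top]
            real_tendsto_divide_at_top[OF tendsto_const[of "ln (real CARD('a))"] Delta_Suc_at_top]]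
          tendsto_mult_left_zero[OF penalty_over_Delta_Suc, of c]]
      by (simp add: add_divide_distrib o_def ac_simps)
    ultimately show "\<exists>err. (\<lambda>n. err n / ?D n) \<longlonglongrightarrow> 0 \<and>
        (\<forall>n. ln (real (p_count k K X (Suc n))) \<le> (entropy + e) * ?D n + err n)"
      by (intro exI[of _ "\<lambda>n. ln (?D n) + ln (real CARD('a)) + c * penalty n"]) simp
  qed
qed

end

theorem corollary5p5:
  fixes k :: nat and K :: "nat \<Rightarrow> nat \<Rightarrow> nat" and A :: "'a::finite \<Rightarrow> 'a \<Rightarrow> nat"
  assumes "zero_one_on {..<k} K" and "primitive_on {..<k} K"
    and "zero_one_on UNIV A" and "primitive_on UNIV A"
  shows "\<exists>h::real.
     (\<lambda>n. ln (real (p_count k K (hom_tree_shift k K A) n)) / real (card (Delta k K n))) \<longlonglongrightarrow> h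
     \<and> (\<forall>i<k. ereal h = stem_entropy k K (hom_tree_shift k K A) i)"
proof (cases "k = 0")
  case True
  then have "Delta k K n = {[]}" for n by (auto simp: Delta_def semigrp_def is_min_rep_def)
  then show ?thesis using True by (auto simp: p_count_def)
next
  case False
  then interpret primitive_hom_shift k K A using assms by unfold_locales simp_all
  have "ereal entropy = stem_entropy k K X i" if "i < k" for i
    using lim_imp_Limsup[OF trivial_limit_sequentially tendsto_ereal[OF stem_ratio_tendsto[OF that]]]
    by (simp add: stem_entropy_def)
  then show ?thesis using count_ratio_tendsto by blast
qed

end
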